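(* On $\mathcal{P}(\mathbb{R}^{2m},\mathbb{C})\cap\ker(\Delta_x,\Delta_u)$, $$AC=\frac{H_x+H_xH_u+H_u}{(H_x+1)(H_u+1)}\,CA-(H_x+H_u)+\frac{S_xS_u}{H_x+1}+\frac{S_uS_x}{H_u+1}.$$
   Context: Fix an integer $m>4$. For $x,u\in\mathbb{R}^m$ let $\mathcal{P}(\mathbb{R}^{2m},\mathbb{C})$ be complex polynomials in $(x,u)$, $\mathcal{P}_{p,q}$ those of bidegree $(p,q)$. Write $|x|^2=\sum x_j^2$, $\langle u,x\rangle=\sum u_jx_j$, $\Delta_x=\sum\partial_{x_j}^2$, $\Delta_u=\sum\partial_{u_j}^2$, $\langle\partial_u,\partial_x\rangle=\sum\partial_{u_j}\partial_{x_j}$, $\langle x,\partial_u\rangle=\sum x_j\partial_{u_j}$, $\langle u,\partial_x\rangle=\sum u_j\partial_{x_j}$, $\mathbb{E}_x=\sum x_j\partial_{x_j}$, $\mathbb{E}_u=\sum u_j\partial_{u_j}$, $H_x=-(\mathbb{E}_x+\frac m2)$, $H_u=-(\mathbb{E}_u+\frac m2)$, $\ker(D_1,\dots,D_r)=\bigcap\ker D_i$. Every $P\in\mathcal{P}_{p,q}$ is uniquely $\sum_{a,b\ge0}|x|^{2a}|u|^{2b}H'_{p-2a,q-2b}$ with $H'_{p-2a,q-2b}\in\mathcal{P}_{p-2a,q-2b}\cap\ker(\Delta_x,\Delta_u)$; $\pi_{\mathfrak{s}}P:=H'_{p,q}$. On $\ker(\Delta_x,\Delta_u)$: $S_x=\pi_{\mathfrak{s}}\langle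 x,\partial_u\rangle$, $S_u=\pi_{\mathfrak{s}}\langle u,\partial_x\rangle$, $A=\pi_{\mathfrak{s}}\langle\partial_u,\partial_x\rangle$, $C=\pi_{\mathfrak{s}}\langle u,x\rangle$. Convention: a quotient $T/G$ with $G$ polynomial in $H_x,H_u$ means $G^{-1}T$; rational functions of $H_x,H_u$ (written to the left or as denominators) are evaluated at the eigenvalues of $H_x,H_u$ on the bihomogeneous output of the operator product. *)

theory Defs
  imports Complex_Main
begin

text \<open>Complex polynomials in x_1..x_m, u_1..u_m are represented by their coefficient
  functions: P alpha beta is the coefficient of the monomial x^alpha u^beta.\<close>

type_synonym cpoly = "(nat \<Rightarrow> nat) \<Rightarrow> (nat \<Rightarrow> nat) \<Rightarrow> complex"

definition is_poly :: "nat \<Rightarrow> cpoly \<Rightarrow> bool" where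
  "is_poly m P \<longleftrightarrow> finite {(\<alpha>, \<beta>). P \<alpha> \<beta> \<noteq> 0} \<and>
     (\<forall>\<alpha> \<beta>. P \<alpha> \<beta> \<noteq> 0 \<longrightarrow> (\<forall>i\<ge>m. \<alpha> i = 0 \<and> \<beta> i = 0))"

definition zero_poly :: cpoly where "zero_poly = (\<lambda>\<alpha> \<beta>. 0)"

definition mulx :: "nat \<Rightarrow> cpoly \<Rightarrow> cpoly" where
  "mulx j P = (\<lambda>\<alpha> \<beta>. if \<alpha> j = 0 then 0 else P (\<alpha>(j := \<alpha> j - 1)) \<beta>)"
definition mulu :: "nat \<Rightarrow> cpoly \<Rightarrow> cpoly" where
  "mulu j P = (\<lambda>\<alpha> \<beta>. if \<beta> j = 0 then 0 else P \<alpha> (\<beta>(j := \<beta> j - 1)))"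

definition dx :: "nat \<Rightarrow> cpoly \<Rightarrow> cpoly" where
  "dx j P = (\<lambda>\<alpha> \<beta>. of_nat (\<alpha> j + 1) * P (\<alpha>(j := \<alpha> j + 1)) \<beta>)"
definition du :: "nat \<Rightarrow> cpoly \<Rightarrow> cpoly" where
  "du j P = (\<lambda>\<alpha> \<beta>. of_nat (\<beta> j + 1) * P \<alpha> (\<beta>(j := \<beta> j + 1)))"

definition lap_x :: "nat \<Rightarrow> cpoly \<Rightarrow> cpoly" where
  "lap_x m P = (\<lambda>\<alpha> \<beta>. \<Sum>j<m. dx j (dx j P) \<alpha> \<beta>)"
definition lap_u :: "nat \<Rightarrow> cpoly \<Rightarrow> cpoly" where
  "lap_u m P = (\<lambda>\<alpha> \<beta>. \<Sum>j<m. du j (du j P) \<alpha> \<beta>)"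

definition harm :: "nat \<Rightarrow> cpoly \<Rightarrow> bool" where
  "harm m P \<longleftrightarrow> lap_x m P = zero_poly \<and> lap_u m P = zero_poly"

definition norm2x :: "nat \<Rightarrow> cpoly \<Rightarrow> cpoly" where
  "norm2x m P = (\<lambda>\<alpha> \<beta>. \<Sum>j<m. mulx j (mulx j P) \<alpha> \<beta>)"
definition norm2u :: "nat \<Rightarrow> cpoly \<Rightarrow> cpoly" where
  "norm2u m P = (\<lambda>\<alpha> \<beta>. \<Sum>j<m. mulu j (mulu j P) \<alpha> \<beta>)"

text \<open>pi_s: the component H'_{0,0} of the (unique) decomposition
  P = sum_{a,b} |x|^{2a} |u|^{2b} H'_{a,b} with H'_{a,b} in ker(Delta_x,Delta_u).
  (Applied bihomogeneous-componentwise this is exactly the paper's pi_s.)\<close>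
definition pis :: "nat \<Rightarrow> cpoly \<Rightarrow> cpoly" where
  "pis m P = (THE H. \<exists>N (Hf :: nat \<Rightarrow> nat \<Rightarrow> cpoly).
      (\<forall>a b. is_poly m (Hf a b) \<and> harm m (Hf a b)) \<and>
      (\<forall>a b. N \<le> a \<or> N \<le> b \<longrightarrow> Hf a b = zero_poly) \<and>
      P = (\<lambda>\<alpha> \<beta>. \<Sum>a<N. \<Sum>b<N. ((norm2x m ^^ a) ((norm2u m ^^ b) (Hf a b))) \<alpha> \<beta>) \<and>
      H = Hf 0 0)"

definition Sx :: "nat \<Rightarrow> cpoly \<Rightarrow> cpoly" where
  "Sx m P = pis m (\<lambda>\<alpha> \<beta>. \<Sum>j<m. mulx j (du j P) \<alpha> \<beta>)"
definition Su :: "nat \<Rightarrow> cpoly \<Rightarrow> cpoly" where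
  "Su m P = pis m (\<lambda>\<alpha> \<beta>. \<Sum>j<m. mulu j (dx j P) \<alpha> \<beta>)"
definition Aop :: "nat \<Rightarrow> cpoly \<Rightarrow> cpoly" where
  "Aop m P = pis m (\<lambda>\<alpha> \<beta>. \<Sum>j<m. du j (dx j P) \<alpha> \<beta>)"
definition Cop :: "nat \<Rightarrow> cpoly \<Rightarrow> cpoly" where
  "Cop m P = pis m (\<lambda>\<alpha> \<beta>. \<Sum>j<m. mulu j (mulx j P) \<alpha> \<beta>)"

text \<open>f(H_x,H_u) acting on a polynomial: on the monomial x^alpha u^beta,
  H_x = -(|alpha| + m/2) and H_u = -(|beta| + m/2).\<close>
definition diagop :: "nat \<Rightarrow> (complex \<Rightarrow> complex \<Rightarrow> complex) \<Rightarrow> cpoly \<Rightarrow> cpoly" where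
  "diagop m f P = (\<lambda>\<alpha> \<beta>. f (- (of_nat (\<Sum>i<m. \<alpha> i) + of_nat m / 2))
                            (- (of_nat (\<Sum>i<m. \<beta> i) + of_nat m / 2)) * P \<alpha> \<beta>)"

end

theory Submission
  imports Defs "HOL-Library.Function_Algebras"
begin

text \<open>
  On a harmonic polynomial \<open>G\<close> of bidegree \<open>(p, q)\<close> the projected operators can be written down
  explicitly: \<open>\<langle>u,x\<rangle>G\<close>, \<open>\<langle>x,\<partial>\<^sub>u\<rangle>G\<close> and \<open>\<langle>u,\<partial>\<^sub>x\<rangle>G\<close> differ from a harmonic polynomial by
  \<open>|x|\<^sup>2h\<^sub>1 + |u|\<^sup>2h\<^sub>2 + |x|\<^sup>2|u|\<^sup>2h\<^sub>3\<close> with harmonic \<open>h\<^sub>i\<close>, and the corrections are read off from the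
  commutation relations of the Weyl algebra, which produce the denominators
  \<open>2p + m - 2 = -2(H\<^sub>x + 1)\<close>. Such a remainder is orthogonal to all harmonic polynomials for the
  Fischer inner product, in which multiplication by \<open>|x|\<^sup>2\<close> is adjoint to \<open>\<Delta>\<^sub>x\<close>; hence the harmonic
  term is the \<open>\<pi>\<^sub>s\<close>-projection. With these formulas both sides of the identity become the same
  combination of operator words applied to \<open>G\<close>. A general harmonic polynomial is the sum of its
  bihomogeneous components, which are again harmonic, and all operators involved are additive on
  harmonic polynomials. The hypothesis \<open>m > 4\<close> keeps the denominators nonzero also in degree
  \<open>p - 1 = -1\<close>.
\<close>

definition scale :: "complex \<Rightarrow> cpoly \<Rightarrow> cpoly" where
  "scale k F = (\<lambda>\<alpha> \<beta>. k * F \<alpha> \<beta>)"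

definition linear_op :: "(cpoly \<Rightarrow> cpoly) \<Rightarrow> bool" where
  "linear_op T \<longleftrightarrow> (\<forall>F G. T (F + G) = T F + T G) \<and> (\<forall>k F. T (scale k F) = scale k (T F))"

lemma sum_poly_apply: "(\<Sum>k\<in>K. f k) \<alpha> \<beta> = (\<Sum>k\<in>K. (f k :: cpoly) \<alpha> \<beta>)"
  by (induction K rule: infinite_finite_induct) auto

lemma sum_poly_eta: "(\<lambda>\<alpha> \<beta>. \<Sum>k\<in>K. f k \<alpha> \<beta>) = (\<Sum>k\<in>K. (f k :: cpoly))"
  by (simp add: fun_eq_iff sum_poly_apply)

lemma scale_scale [simp]: "scale a (scale b F) = scale (b * a) F"
  and scale_zero [simp]: "scale k 0 = 0"
  and scale_0 [simp]: "scale 0 F = 0"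
  by (simp_all add: scale_def fun_eq_iff)

lemma scale_sum: "scale k (\<Sum>j\<in>J. f j) = (\<Sum>j\<in>J. scale k (f j))"
  by (simp add: scale_def fun_eq_iff sum_poly_apply sum_distrib_left)

lemma of_nat_mult_poly: "of_nat n * F = scale (of_nat n) F"
  by (simp add: scale_def fun_eq_iff)

lemma diff_eq_add_scale: "F - G = F + scale (-1) G"
  by (simp add: scale_def fun_eq_iff)

lemma linear_op_add: "linear_op T \<Longrightarrow> T (F + G) = T F + T G"
  and linear_op_scale: "linear_op T \<Longrightarrow> T (scale k F) = scale k (T F)"
  by (simp_all add: linear_op_def)

lemma linear_op_zero: "linear_op T \<Longrightarrow> T 0 = 0"
  using linear_op_scale[of T 0 0] by simp

lemma linear_op_diff: "linear_op T \<Longrightarrow> T (F - G) = T F - T G"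
  by (simp only: diff_eq_add_scale linear_op_add linear_op_scale)

lemma linear_op_sum: "linear_op T \<Longrightarrow> T (\<Sum>j\<in>J. f j) = (\<Sum>j\<in>J. T (f j))"
  by (induction J rule: infinite_finite_induct) (simp_all add: linear_op_zero linear_op_add fun_eq_iff)

lemma linear_op_mulx: "linear_op (mulx j)"
  and linear_op_mulu: "linear_op (mulu j)"
  and linear_op_dx: "linear_op (dx j)"
  and linear_op_du: "linear_op (du j)"
  by (simp_all add: linear_op_def fun_eq_iff mulx_def mulu_def dx_def du_def scale_def algebra_simps)

lemmas elem_linear =
  linear_op_add[OF linear_op_mulx] linear_op_add[OF linear_op_mulu]
  linear_op_add[OF linear_op_dx] linear_op_add[OF linear_op_du]
  linear_op_scale[OF linear_op_mulx] linear_op_scale[OF linear_op_mulu]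
  linear_op_scale[OF linear_op_dx] linear_op_scale[OF linear_op_du]

lemma linear_op_diagop: "linear_op (diagop m f)"
  by (simp add: linear_op_def diagop_def scale_def fun_eq_iff algebra_simps)

text \<open>Coefficientwise, every pair of the elementary operators commutes, except that
  \<open>[\<partial>\<^sub>j, x\<^sub>j] = 1\<close>; summing over the index gives the following identity.\<close>

lemma sum_ops_commute:
  fixes m :: nat
  assumes "\<And>k. linear_op (A k)" "\<And>j. linear_op (B j)"
    and "\<And>j k F. A k (B j F) = B j (A k F) + (if j = k then C j F else 0)"
  shows "(\<Sum>k<m. A k (\<Sum>j<m. B j F)) = (\<Sum>j<m. B j (\<Sum>k<m. A k F)) + (\<Sum>j<m. C j F)"
proof -
  have delta: "(\<Sum>k<m. \<Sum>j<m. if j = k then C j F else 0) = (\<Sum>k<m. C k F)"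
    by (rule sum.cong[OF refl], subst sum.delta) auto
  have "(\<Sum>k<m. A k (\<Sum>j<m. B j F)) = (\<Sum>k<m. \<Sum>j<m. B j (A k F) + (if j = k then C j F else 0))"
    by (simp add: linear_op_sum assms)
  also have "\<dots> = (\<Sum>j<m. \<Sum>k<m. B j (A k F)) + (\<Sum>j<m. C j F)"
    by (simp only: sum.distrib delta sum.swap[of "\<lambda>k j. B j (A k F)"])
  also have "\<dots> = (\<Sum>j<m. B j (\<Sum>k<m. A k F)) + (\<Sum>j<m. C j F)"
    by (simp add: linear_op_sum assms)
  finally show ?thesis .
qed

definition mul_ux :: "nat \<Rightarrow> cpoly \<Rightarrow> cpoly" where
  "mul_ux m F = (\<Sum>j<m. mulu j (mulx j F))"
definition dd_ux :: "nat \<Rightarrow> cpoly \<Rightarrow> cpoly" where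
  "dd_ux m F = (\<Sum>j<m. du j (dx j F))"
definition x_du :: "nat \<Rightarrow> cpoly \<Rightarrow> cpoly" where
  "x_du m F = (\<Sum>j<m. mulx j (du j F))"
definition u_dx :: "nat \<Rightarrow> cpoly \<Rightarrow> cpoly" where
  "u_dx m F = (\<Sum>j<m. mulu j (dx j F))"
definition euler_x :: "nat \<Rightarrow> cpoly \<Rightarrow> cpoly" where
  "euler_x m F = (\<Sum>j<m. mulx j (dx j F))"
definition euler_u :: "nat \<Rightarrow> cpoly \<Rightarrow> cpoly" where
  "euler_u m F = (\<Sum>j<m. mulu j (du j F))"

lemma lap_x_sum: "lap_x m F = (\<Sum>j<m. dx j (dx j F))"
  and lap_u_sum: "lap_u m F = (\<Sum>j<m. du j (du j F))"
  and norm2x_sum: "norm2x m F = (\<Sum>j<m. mulx j (mulx j F))"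
  and norm2u_sum: "norm2u m F = (\<Sum>j<m. mulu j (mulu j F))"
  by (simp_all add: fun_eq_iff sum_poly_apply lap_x_def lap_u_def norm2x_def norm2u_def)

lemma Aop_eq: "Aop m P = pis m (dd_ux m P)"
  and Cop_eq: "Cop m P = pis m (mul_ux m P)"
  and Sx_eq: "Sx m P = pis m (x_du m P)"
  and Su_eq: "Su m P = pis m (u_dx m P)"
  by (simp_all add: Aop_def dd_ux_def Cop_def mul_ux_def Sx_def x_du_def Su_def u_dx_def sum_poly_eta)

lemmas sum_op_defs = mul_ux_def dd_ux_def x_du_def u_dx_def euler_x_def euler_u_def
  lap_x_sum lap_u_sum norm2x_sum norm2u_sum

lemma linear_ops:
  "linear_op (mul_ux m)" "linear_op (dd_ux m)" "linear_op (x_du m)" "linear_op (u_dx m)"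
  "linear_op (euler_x m)" "linear_op (euler_u m)" "linear_op (lap_x m)" "linear_op (lap_u m)"
  "linear_op (norm2x m)" "linear_op (norm2u m)"
  by (simp_all add: linear_op_def sum_op_defs elem_linear sum.distrib scale_sum)

lemma Suc_diff_simps:
  "\<not> n \<le> Suc 0 \<Longrightarrow> Suc (Suc (n - Suc (Suc 0))) = n"
  "\<not> n \<le> Suc 0 \<Longrightarrow> Suc (n - Suc (Suc 0)) = n - Suc 0"
  "0 < n \<Longrightarrow> n \<le> Suc 0 \<longleftrightarrow> n = Suc 0"
  by auto

lemmas coeff_defs = fun_eq_iff dx_def du_def mulx_def mulu_def scale_def

lemmas weyl_sum_simps = linear_op_def elem_linear sum_op_defs sum.distrib sum_subtractf scale_sum
  of_nat_mult_poly

lemma lap_x_dd_ux: "lap_x m (dd_ux m F) = dd_ux m (lap_x m F)"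
proof -
  have "dx k (dx k (du j (dx j G))) = du j (dx j (dx k (dx k G)))" for j k G
    by (auto simp: coeff_defs fun_upd_twist algebra_simps Suc_diff_simps)
  then show ?thesis
    using sum_ops_commute[where A = "\<lambda>k G. dx k (dx k G)" and B = "\<lambda>j G. du j (dx j G)"
        and C = "\<lambda>j G. 0" and m = m and F = F]
    by (simp add: weyl_sum_simps)
qed

lemma lap_u_dd_ux: "lap_u m (dd_ux m F) = dd_ux m (lap_u m F)"
proof -
  have "du k (du k (du j (dx j G))) = du j (dx j (du k (du k G)))" for j k G
    by (auto simp: coeff_defs fun_upd_twist algebra_simps Suc_diff_simps)
  then show ?thesis
    using sum_ops_commute[where A = "\<lambda>k G. du k (du k G)" and B = "\<lambda>j G. du j (dx j G)"
        and C = "\<lambda>j G. 0" and m = m and F = F]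
    by (simp add: weyl_sum_simps)
qed

lemma lap_x_x_du: "lap_x m (x_du m F) = x_du m (lap_x m F) + scale 2 (dd_ux m F)"
proof -
  have "dx k (dx k (mulx j (du j G))) = mulx j (du j (dx k (dx k G)))
      + (if j = k then scale 2 (du j (dx j G)) else 0)" for j k G
    by (cases "j = k") (auto simp: coeff_defs fun_upd_twist algebra_simps Suc_diff_simps)
  then show ?thesis
    using sum_ops_commute[where A = "\<lambda>k G. dx k (dx k G)" and B = "\<lambda>j G. mulx j (du j G)"
        and C = "\<lambda>j G. scale 2 (du j (dx j G))" and m = m and F = F]
    by (simp add: weyl_sum_simps)
qed

lemma lap_u_x_du: "lap_u m (x_du m F) = x_du m (lap_u m F)"
proof -
  have "du k (du k (mulx j (du j G))) = mulx j (du j (du k (du k G)))" for j k G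
    by (auto simp: coeff_defs fun_upd_twist algebra_simps Suc_diff_simps)
  then show ?thesis
    using sum_ops_commute[where A = "\<lambda>k G. du k (du k G)" and B = "\<lambda>j G. mulx j (du j G)"
        and C = "\<lambda>j G. 0" and m = m and F = F]
    by (simp add: weyl_sum_simps)
qed

lemma lap_x_u_dx: "lap_x m (u_dx m F) = u_dx m (lap_x m F)"
proof -
  have "dx k (dx k (mulu j (dx j G))) = mulu j (dx j (dx k (dx k G)))" for j k G
    by (auto simp: coeff_defs fun_upd_twist algebra_simps Suc_diff_simps)
  then show ?thesis
    using sum_ops_commute[where A = "\<lambda>k G. dx k (dx k G)" and B = "\<lambda>j G. mulu j (dx j G)"
        and C = "\<lambda>j G. 0" and m = m and F = F]
    by (simp add: weyl_sum_simps)
qed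

lemma lap_u_u_dx: "lap_u m (u_dx m F) = u_dx m (lap_u m F) + scale 2 (dd_ux m F)"
proof -
  have "du k (du k (mulu j (dx j G))) = mulu j (dx j (du k (du k G)))
      + (if j = k then scale 2 (du j (dx j G)) else 0)" for j k G
    by (cases "j = k") (auto simp: coeff_defs fun_upd_twist algebra_simps Suc_diff_simps)
  then show ?thesis
    using sum_ops_commute[where A = "\<lambda>k G. du k (du k G)" and B = "\<lambda>j G. mulu j (dx j G)"
        and C = "\<lambda>j G. scale 2 (du j (dx j G))" and m = m and F = F]
    by (simp add: weyl_sum_simps)
qed

lemma lap_x_mul_ux: "lap_x m (mul_ux m F) = mul_ux m (lap_x m F) + scale 2 (u_dx m F)"
proof -
  have "dx k (dx k (mulu j (mulx j G))) = mulu j (mulx j (dx k (dx k G)))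
      + (if j = k then scale 2 (mulu j (dx j G)) else 0)" for j k G
    by (cases "j = k") (auto simp: coeff_defs fun_upd_twist algebra_simps Suc_diff_simps)
  then show ?thesis
    using sum_ops_commute[where A = "\<lambda>k G. dx k (dx k G)" and B = "\<lambda>j G. mulu j (mulx j G)"
        and C = "\<lambda>j G. scale 2 (mulu j (dx j G))" and m = m and F = F]
    by (simp add: weyl_sum_simps)
qed

lemma lap_u_mul_ux: "lap_u m (mul_ux m F) = mul_ux m (lap_u m F) + scale 2 (x_du m F)"
proof -
  have "du k (du k (mulu j (mulx j G))) = mulu j (mulx j (du k (du k G)))
      + (if j = k then scale 2 (mulx j (du j G)) else 0)" for j k G
    by (cases "j = k") (auto simp: coeff_defs fun_upd_twist algebra_simps Suc_diff_simps)
  then show ?thesis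
    using sum_ops_commute[where A = "\<lambda>k G. du k (du k G)" and B = "\<lambda>j G. mulu j (mulx j G)"
        and C = "\<lambda>j G. scale 2 (mulx j (du j G))" and m = m and F = F]
    by (simp add: weyl_sum_simps)
qed

lemmas ops_add = linear_ops[THEN linear_op_add]
  and ops_diff = linear_ops[THEN linear_op_diff]
  and ops_scale = linear_ops[THEN linear_op_scale]
  and ops_zero = linear_ops[THEN linear_op_zero]

lemma lap_x_norm2x: "lap_x m (norm2x m F) = norm2x m (lap_x m F) + scale 4 (euler_x m F) + scale (2 * of_nat m) F"
proof -
  have "dx k (dx k (mulx j (mulx j G))) = mulx j (mulx j (dx k (dx k G)))
      + (if j = k then scale 4 (mulx j (dx j G)) + scale 2 G else 0)" for j k G
    by (cases "j = k") (auto simp: coeff_defs fun_upd_twist algebra_simps Suc_diff_simps)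
  then show ?thesis
    using sum_ops_commute[where A = "\<lambda>k G. dx k (dx k G)" and B = "\<lambda>j G. mulx j (mulx j G)"
        and C = "\<lambda>j G. scale 4 (mulx j (dx j G)) + scale 2 G" and m = m and F = F]
    by (simp add: weyl_sum_simps)
qed

lemma lap_u_norm2x: "lap_u m (norm2x m F) = norm2x m (lap_u m F)"
proof -
  have "du k (du k (mulx j (mulx j G))) = mulx j (mulx j (du k (du k G)))" for j k G
    by (auto simp: coeff_defs fun_upd_twist algebra_simps Suc_diff_simps)
  then show ?thesis
    using sum_ops_commute[where A = "\<lambda>k G. du k (du k G)" and B = "\<lambda>j G. mulx j (mulx j G)"
        and C = "\<lambda>j G. 0" and m = m and F = F]
    by (simp add: weyl_sum_simps)
qed

lemma lap_x_norm2u: "lap_x m (norm2u m F) = norm2u m (lap_x m F)"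
proof -
  have "dx k (dx k (mulu j (mulu j G))) = mulu j (mulu j (dx k (dx k G)))" for j k G
    by (auto simp: coeff_defs fun_upd_twist algebra_simps Suc_diff_simps)
  then show ?thesis
    using sum_ops_commute[where A = "\<lambda>k G. dx k (dx k G)" and B = "\<lambda>j G. mulu j (mulu j G)"
        and C = "\<lambda>j G. 0" and m = m and F = F]
    by (simp add: weyl_sum_simps)
qed

lemma lap_u_norm2u: "lap_u m (norm2u m F) = norm2u m (lap_u m F) + scale 4 (euler_u m F) + scale (2 * of_nat m) F"
proof -
  have "du k (du k (mulu j (mulu j G))) = mulu j (mulu j (du k (du k G)))
      + (if j = k then scale 4 (mulu j (du j G)) + scale 2 G else 0)" for j k G
    by (cases "j = k") (auto simp: coeff_defs fun_upd_twist algebra_simps Suc_diff_simps)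
  then show ?thesis
    using sum_ops_commute[where A = "\<lambda>k G. du k (du k G)" and B = "\<lambda>j G. mulu j (mulu j G)"
        and C = "\<lambda>j G. scale 4 (mulu j (du j G)) + scale 2 G" and m = m and F = F]
    by (simp add: weyl_sum_simps)
qed

lemma dd_ux_mul_ux: "dd_ux m (mul_ux m F) = mul_ux m (dd_ux m F) + euler_x m F + euler_u m F + scale (of_nat m) F"
proof -
  have "du k (dx k (mulu j (mulx j G))) = mulu j (mulx j (du k (dx k G)))
      + (if j = k then mulx j (dx j G) + mulu j (du j G) + G else 0)" for j k G
    by (cases "j = k") (auto simp: coeff_defs fun_upd_twist algebra_simps Suc_diff_simps)
  then show ?thesis
    using sum_ops_commute[where A = "\<lambda>k G. du k (dx k G)" and B = "\<lambda>j G. mulu j (mulx j G)"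
        and C = "\<lambda>j G. mulx j (dx j G) + mulu j (du j G) + G" and m = m and F = F]
    by (simp add: weyl_sum_simps)
qed

lemma dd_ux_norm2x: "dd_ux m (norm2x m F) = norm2x m (dd_ux m F) + scale 2 (x_du m F)"
proof -
  have "du k (dx k (mulx j (mulx j G))) = mulx j (mulx j (du k (dx k G)))
      + (if j = k then scale 2 (mulx j (du j G)) else 0)" for j k G
    by (cases "j = k") (auto simp: coeff_defs fun_upd_twist algebra_simps Suc_diff_simps)
  then show ?thesis
    using sum_ops_commute[where A = "\<lambda>k G. du k (dx k G)" and B = "\<lambda>j G. mulx j (mulx j G)"
        and C = "\<lambda>j G. scale 2 (mulx j (du j G))" and m = m and F = F]
    by (simp add: weyl_sum_simps)
qed

lemma dd_ux_norm2u: "dd_ux m (norm2u m F) = norm2u m (dd_ux m F) + scale 2 (u_dx m F)"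
proof -
  have "du k (dx k (mulu j (mulu j G))) = mulu j (mulu j (du k (dx k G)))
      + (if j = k then scale 2 (mulu j (dx j G)) else 0)" for j k G
    by (cases "j = k") (auto simp: coeff_defs fun_upd_twist algebra_simps Suc_diff_simps)
  then show ?thesis
    using sum_ops_commute[where A = "\<lambda>k G. du k (dx k G)" and B = "\<lambda>j G. mulu j (mulu j G)"
        and C = "\<lambda>j G. scale 2 (mulu j (dx j G))" and m = m and F = F]
    by (simp add: weyl_sum_simps)
qed

lemma dd_ux_u_dx: "dd_ux m (u_dx m F) = u_dx m (dd_ux m F) + lap_x m F"
proof -
  have "du k (dx k (mulu j (dx j G))) = mulu j (dx j (du k (dx k G)))
      + (if j = k then dx j (dx j G) else 0)" for j k G
    by (cases "j = k") (auto simp: coeff_defs fun_upd_twist algebra_simps Suc_diff_simps)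
  then show ?thesis
    using sum_ops_commute[where A = "\<lambda>k G. du k (dx k G)" and B = "\<lambda>j G. mulu j (dx j G)"
        and C = "\<lambda>j G. dx j (dx j G)" and m = m and F = F]
    by (simp add: weyl_sum_simps)
qed

lemma dd_ux_x_du: "dd_ux m (x_du m F) = x_du m (dd_ux m F) + lap_u m F"
proof -
  have "du k (dx k (mulx j (du j G))) = mulx j (du j (du k (dx k G)))
      + (if j = k then du j (du j G) else 0)" for j k G
    by (cases "j = k") (auto simp: coeff_defs fun_upd_twist algebra_simps Suc_diff_simps)
  then show ?thesis
    using sum_ops_commute[where A = "\<lambda>k G. du k (dx k G)" and B = "\<lambda>j G. mulx j (du j G)"
        and C = "\<lambda>j G. du j (du j G)" and m = m and F = F]
    by (simp add: weyl_sum_simps)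
qed

lemma x_du_norm2u: "x_du m (norm2u m F) = norm2u m (x_du m F) + scale 2 (mul_ux m F)"
proof -
  have "mulx k (du k (mulu j (mulu j G))) = mulu j (mulu j (mulx k (du k G)))
      + (if j = k then scale 2 (mulu j (mulx j G)) else 0)" for j k G
    by (cases "j = k") (auto simp: coeff_defs fun_upd_twist algebra_simps Suc_diff_simps)
  then show ?thesis
    using sum_ops_commute[where A = "\<lambda>k G. mulx k (du k G)" and B = "\<lambda>j G. mulu j (mulu j G)"
        and C = "\<lambda>j G. scale 2 (mulu j (mulx j G))" and m = m and F = F]
    by (simp add: weyl_sum_simps)
qed

lemma u_dx_norm2x: "u_dx m (norm2x m F) = norm2x m (u_dx m F) + scale 2 (mul_ux m F)"
proof -
  have "mulu k (dx k (mulx j (mulx j G))) = mulx j (mulx j (mulu k (dx k G)))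
      + (if j = k then scale 2 (mulu j (mulx j G)) else 0)" for j k G
    by (cases "j = k") (auto simp: coeff_defs fun_upd_twist algebra_simps Suc_diff_simps)
  then show ?thesis
    using sum_ops_commute[where A = "\<lambda>k G. mulu k (dx k G)" and B = "\<lambda>j G. mulx j (mulx j G)"
        and C = "\<lambda>j G. scale 2 (mulu j (mulx j G))" and m = m and F = F]
    by (simp add: weyl_sum_simps)
qed

lemma x_du_norm2x: "x_du m (norm2x m F) = norm2x m (x_du m F)"
proof -
  have "mulx k (du k (mulx j (mulx j G))) = mulx j (mulx j (mulx k (du k G)))" for j k G
    by (auto simp: coeff_defs fun_upd_twist algebra_simps Suc_diff_simps)
  then show ?thesis
    using sum_ops_commute[where A = "\<lambda>k G. mulx k (du k G)" and B = "\<lambda>j G. mulx j (mulx j G)"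
        and C = "\<lambda>j G. 0" and m = m and F = F]
    by (simp add: weyl_sum_simps)
qed

lemma u_dx_norm2u: "u_dx m (norm2u m F) = norm2u m (u_dx m F)"
proof -
  have "mulu k (dx k (mulu j (mulu j G))) = mulu j (mulu j (mulu k (dx k G)))" for j k G
    by (auto simp: coeff_defs fun_upd_twist algebra_simps Suc_diff_simps)
  then show ?thesis
    using sum_ops_commute[where A = "\<lambda>k G. mulu k (dx k G)" and B = "\<lambda>j G. mulu j (mulu j G)"
        and C = "\<lambda>j G. 0" and m = m and F = F]
    by (simp add: weyl_sum_simps)
qed

lemma u_dx_x_du: "u_dx m (x_du m F) = x_du m (u_dx m F) + euler_u m F - euler_x m F"
proof -
  have "mulu k (dx k (mulx j (du j G))) = mulx j (du j (mulu k (dx k G)))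
      + (if j = k then mulu j (du j G) - mulx j (dx j G) else 0)" for j k G
    by (cases "j = k") (auto simp: coeff_defs fun_upd_twist algebra_simps Suc_diff_simps)
  then show ?thesis
    using sum_ops_commute[where A = "\<lambda>k G. mulu k (dx k G)" and B = "\<lambda>j G. mulx j (du j G)"
        and C = "\<lambda>j G. mulu j (du j G) - mulx j (dx j G)" and m = m and F = F]
    by (simp add: weyl_sum_simps)
qed

lemma norm2u_norm2x: "norm2u m (norm2x m F) = norm2x m (norm2u m F)"
proof -
  have "mulu k (mulu k (mulx j (mulx j G))) = mulx j (mulx j (mulu k (mulu k G)))" for j k G
    by (auto simp: coeff_defs fun_upd_twist algebra_simps Suc_diff_simps)
  then show ?thesis
    using sum_ops_commute[where A = "\<lambda>k G. mulu k (mulu k G)" and B = "\<lambda>j G. mulx j (mulx j G)"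
        and C = "\<lambda>j G. 0" and m = m and F = F]
    by (simp add: weyl_sum_simps)
qed

lemmas weyl_relations = lap_x_dd_ux lap_u_dd_ux lap_x_x_du lap_u_x_du lap_x_u_dx lap_u_u_dx
  lap_x_mul_ux lap_u_mul_ux lap_x_norm2x lap_u_norm2x lap_x_norm2u lap_u_norm2u
  dd_ux_mul_ux dd_ux_norm2x dd_ux_norm2u dd_ux_u_dx dd_ux_x_du
  x_du_norm2u u_dx_norm2x x_du_norm2x u_dx_norm2u u_dx_x_du norm2u_norm2x

section \<open>Homogeneity\<close>

lemma sum_fun_upd:
  fixes f :: "'a \<Rightarrow> 'b::comm_monoid_add"
  assumes "finite A" "j \<in> A"
  shows "sum (f(j := v)) A + f j = sum f A + v"
proof -
  have "sum (f(j := v)) (A - {j}) = sum f (A - {j})"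
    by (rule sum.cong) auto
  then show ?thesis
    using sum.remove[OF assms, of f] sum.remove[OF assms, of "f(j := v)"] by (simp add: ac_simps)
qed

lemma prod_fun_upd:
  fixes f :: "'a \<Rightarrow> 'b::comm_monoid_mult"
  assumes "finite A" "j \<in> A"
  shows "prod (f(j := v)) A * f j = prod f A * v"
proof -
  have "prod (f(j := v)) (A - {j}) = prod f (A - {j})"
    by (rule prod.cong) auto
  then show ?thesis
    using prod.remove[OF assms, of f] prod.remove[OF assms, of "f(j := v)"] by (simp add: ac_simps)
qed

definition homog_x :: "nat \<Rightarrow> int \<Rightarrow> cpoly \<Rightarrow> bool" where
  "homog_x m p F \<longleftrightarrow> (\<forall>\<alpha> \<beta>. int (\<Sum>i<m. \<alpha> i) \<noteq> p \<longrightarrow> F \<alpha> \<beta> = 0)"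

definition homog_u :: "nat \<Rightarrow> int \<Rightarrow> cpoly \<Rightarrow> bool" where
  "homog_u m q F \<longleftrightarrow> (\<forall>\<alpha> \<beta>. int (\<Sum>i<m. \<beta> i) \<noteq> q \<longrightarrow> F \<alpha> \<beta> = 0)"

lemma degree_fun_upd:
  fixes \<alpha> :: "nat \<Rightarrow> nat"
  shows "j < m \<Longrightarrow> (\<Sum>i<m. (\<alpha>(j := v)) i) + \<alpha> j = (\<Sum>i<m. \<alpha> i) + v"
  using sum_fun_upd[of "{..<m}" j \<alpha> v] by simp

lemma homog_x_dx:
  assumes "j < m" "homog_x m p F"
  shows "homog_x m (p - 1) (dx j F)"
  unfolding homog_x_def
proof (intro allI impI)
  fix \<alpha> \<beta>
  assume "int (\<Sum>i<m. \<alpha> i) \<noteq> p - 1"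
  then have "int (\<Sum>i<m. (\<alpha>(j := \<alpha> j + 1)) i) \<noteq> p"
    using degree_fun_upd[OF assms(1), of \<alpha> "\<alpha> j + 1"] by linarith
  with assms(2) have "F (\<alpha>(j := \<alpha> j + 1)) \<beta> = 0"
    unfolding homog_x_def by blast
  then show "dx j F \<alpha> \<beta> = 0"
    by (simp add: dx_def)
qed

lemma homog_u_du:
  assumes "j < m" "homog_u m q F"
  shows "homog_u m (q - 1) (du j F)"
  unfolding homog_u_def
proof (intro allI impI)
  fix \<alpha> \<beta>
  assume "int (\<Sum>i<m. \<beta> i) \<noteq> q - 1"
  then have "int (\<Sum>i<m. (\<beta>(j := \<beta> j + 1)) i) \<noteq> q"
    using degree_fun_upd[OF assms(1), of \<beta> "\<beta> j + 1"] by linarith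
  with assms(2) have "F \<alpha> (\<beta>(j := \<beta> j + 1)) = 0"
    unfolding homog_u_def by blast
  then show "du j F \<alpha> \<beta> = 0"
    by (simp add: du_def)
qed

lemma homog_x_mulx:
  assumes "j < m" "homog_x m p F"
  shows "homog_x m (p + 1) (mulx j F)"
  unfolding homog_x_def
proof (intro allI impI)
  fix \<alpha> \<beta>
  assume deg: "int (\<Sum>i<m. \<alpha> i) \<noteq> p + 1"
  show "mulx j F \<alpha> \<beta> = 0"
  proof (cases "\<alpha> j = 0")
    case False
    then have "int (\<Sum>i<m. (\<alpha>(j := \<alpha> j - 1)) i) \<noteq> p"
      using deg degree_fun_upd[OF assms(1), of \<alpha> "\<alpha> j - 1"] by linarith
    with assms(2) have "F (\<alpha>(j := \<alpha> j - 1)) \<beta> = 0"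
      unfolding homog_x_def by blast
    then show ?thesis
      by (simp add: mulx_def)
  qed (simp add: mulx_def)
qed

lemma homog_u_mulu:
  assumes "j < m" "homog_u m q F"
  shows "homog_u m (q + 1) (mulu j F)"
  unfolding homog_u_def
proof (intro allI impI)
  fix \<alpha> \<beta>
  assume deg: "int (\<Sum>i<m. \<beta> i) \<noteq> q + 1"
  show "mulu j F \<alpha> \<beta> = 0"
  proof (cases "\<beta> j = 0")
    case False
    then have "int (\<Sum>i<m. (\<beta>(j := \<beta> j - 1)) i) \<noteq> q"
      using deg degree_fun_upd[OF assms(1), of \<beta> "\<beta> j - 1"] by linarith
    with assms(2) have "F \<alpha> (\<beta>(j := \<beta> j - 1)) = 0"
      unfolding homog_u_def by blast
    then show ?thesis
      by (simp add: mulu_def)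
  qed (simp add: mulu_def)
qed

lemma homog_x_du: "homog_x m p F \<Longrightarrow> homog_x m p (du j F)"
  and homog_x_mulu: "homog_x m p F \<Longrightarrow> homog_x m p (mulu j F)"
  and homog_u_dx: "homog_u m q F \<Longrightarrow> homog_u m q (dx j F)"
  and homog_u_mulx: "homog_u m q F \<Longrightarrow> homog_u m q (mulx j F)"
  by (auto simp: homog_x_def homog_u_def du_def mulu_def dx_def mulx_def)

lemma homog_x_diff: "homog_x m p F \<Longrightarrow> homog_x m p G \<Longrightarrow> homog_x m p (F - G)"
  and homog_u_diff: "homog_u m q F \<Longrightarrow> homog_u m q G \<Longrightarrow> homog_u m q (F - G)"
  and homog_x_scale: "homog_x m p F \<Longrightarrow> homog_x m p (scale k F)"
  and homog_u_scale: "homog_u m q F \<Longrightarrow> homog_u m q (scale k F)"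
  by (simp_all add: homog_x_def homog_u_def scale_def)

lemma homog_x_sum: "(\<And>j. j \<in> J \<Longrightarrow> homog_x m p (f j)) \<Longrightarrow> homog_x m p (\<Sum>j\<in>J. f j)"
  and homog_u_sum: "(\<And>j. j \<in> J \<Longrightarrow> homog_u m q (f j)) \<Longrightarrow> homog_u m q (\<Sum>j\<in>J. f j)"
  by (simp_all add: homog_x_def homog_u_def sum_poly_apply)

lemma homog_x_dd_ux: "homog_x m p F \<Longrightarrow> homog_x m (p - 1) (dd_ux m F)"
  and homog_u_dd_ux: "homog_u m q F \<Longrightarrow> homog_u m (q - 1) (dd_ux m F)"
  and homog_x_mul_ux: "homog_x m p F \<Longrightarrow> homog_x m (p + 1) (mul_ux m F)"
  and homog_u_mul_ux: "homog_u m q F \<Longrightarrow> homog_u m (q + 1) (mul_ux m F)"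
  and homog_x_x_du: "homog_x m p F \<Longrightarrow> homog_x m (p + 1) (x_du m F)"
  and homog_u_x_du: "homog_u m q F \<Longrightarrow> homog_u m (q - 1) (x_du m F)"
  and homog_x_u_dx: "homog_x m p F \<Longrightarrow> homog_x m (p - 1) (u_dx m F)"
  and homog_u_u_dx: "homog_u m q F \<Longrightarrow> homog_u m (q + 1) (u_dx m F)"
  and homog_x_norm2u: "homog_x m p F \<Longrightarrow> homog_x m p (norm2u m F)"
  and homog_u_norm2x: "homog_u m q F \<Longrightarrow> homog_u m q (norm2x m F)"
  unfolding sum_op_defs
  by (intro homog_x_sum homog_u_sum homog_x_dx homog_u_du homog_x_mulx homog_u_mulu
      homog_x_du homog_x_mulu homog_u_dx homog_u_mulx; simp)+

lemma homog_x_norm2x: "homog_x m p F \<Longrightarrow> homog_x m (p + 2) (norm2x m F)"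
proof -
  assume "homog_x m p F"
  then have "homog_x m (p + 1 + 1) (norm2x m F)"
    unfolding norm2x_sum by (intro homog_x_sum homog_x_mulx) simp_all
  then show ?thesis by (simp add: add.assoc)
qed

lemma homog_u_norm2u: "homog_u m q F \<Longrightarrow> homog_u m (q + 2) (norm2u m F)"
proof -
  assume "homog_u m q F"
  then have "homog_u m (q + 1 + 1) (norm2u m F)"
    unfolding norm2u_sum by (intro homog_u_sum homog_u_mulu) simp_all
  then show ?thesis by (simp add: add.assoc)
qed

lemma homog_x_coeff: "homog_x m p F \<Longrightarrow> F \<alpha> \<beta> \<noteq> 0 \<Longrightarrow> of_nat (\<Sum>i<m. \<alpha> i) = (of_int p :: complex)"
  and homog_u_coeff: "homog_u m q F \<Longrightarrow> F \<alpha> \<beta> \<noteq> 0 \<Longrightarrow> of_nat (\<Sum>i<m. \<beta> i) = (of_int q :: complex)"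
  unfolding homog_x_def homog_u_def by (metis of_int_of_nat_eq)+

lemma diagop_bihomog:
  assumes "homog_x m p F" "homog_u m q F"
  shows "diagop m f F = scale (f (- (of_int p + of_nat m / 2)) (- (of_int q + of_nat m / 2))) F"
  using homog_x_coeff[OF assms(1)] homog_u_coeff[OF assms(2)]
  by (fastforce simp: diagop_def scale_def fun_eq_iff)

lemma euler_x_homog:
  assumes "homog_x m p F"
  shows "euler_x m F = scale (of_int p) F"
proof -
  have "mulx j (dx j F) \<alpha> \<beta> = of_nat (\<alpha> j) * F \<alpha> \<beta>" for j \<alpha> \<beta>
    by (auto simp: mulx_def dx_def)
  then have "euler_x m F = (\<lambda>\<alpha> \<beta>. of_nat (\<Sum>i<m. \<alpha> i) * F \<alpha> \<beta>)"
    by (simp add: euler_x_def fun_eq_iff sum_poly_apply sum_distrib_right)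
  then show ?thesis
    using homog_x_coeff[OF assms] by (fastforce simp: scale_def fun_eq_iff)
qed

lemma euler_u_homog:
  assumes "homog_u m q F"
  shows "euler_u m F = scale (of_int q) F"
proof -
  have "mulu j (du j F) \<alpha> \<beta> = of_nat (\<beta> j) * F \<alpha> \<beta>" for j \<alpha> \<beta>
    by (auto simp: mulu_def du_def)
  then have "euler_u m F = (\<lambda>\<alpha> \<beta>. of_nat (\<Sum>i<m. \<beta> i) * F \<alpha> \<beta>)"
    by (simp add: euler_u_def fun_eq_iff sum_poly_apply sum_distrib_right)
  then show ?thesis
    using homog_u_coeff[OF assms] by (fastforce simp: scale_def fun_eq_iff)
qed

definition supp :: "cpoly \<Rightarrow> ((nat \<Rightarrow> nat) \<times> (nat \<Rightarrow> nat)) set" where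
  "supp F = {(\<alpha>, \<beta>). F \<alpha> \<beta> \<noteq> 0}"

lemma is_poly_iff:
  "is_poly m F \<longleftrightarrow> finite (supp F) \<and> (\<forall>\<alpha> \<beta> i. (\<alpha>, \<beta>) \<in> supp F \<longrightarrow> m \<le> i \<longrightarrow> \<alpha> i = 0 \<and> \<beta> i = 0)"
  by (auto simp: is_poly_def supp_def)

lemma is_poly_supp_subset:
  assumes "is_poly m F" "is_poly m G" "supp H \<subseteq> supp F \<union> supp G"
  shows "is_poly m H"
  using assms unfolding is_poly_iff by (blast intro: finite_subset)

lemma is_poly_zero: "is_poly m 0"
  by (simp add: is_poly_iff supp_def)

lemma is_poly_add: "is_poly m F \<Longrightarrow> is_poly m G \<Longrightarrow> is_poly m (F + G)"
  by (rule is_poly_supp_subset[of m F G]) (auto simp: supp_def)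

lemma is_poly_diff: "is_poly m F \<Longrightarrow> is_poly m G \<Longrightarrow> is_poly m (F - G)"
  by (rule is_poly_supp_subset[of m F G]) (auto simp: supp_def)

lemma is_poly_scale: "is_poly m F \<Longrightarrow> is_poly m (scale k F)"
  by (rule is_poly_supp_subset[of m F F]) (auto simp: supp_def scale_def)

lemma is_poly_sum: "(\<And>j. j \<in> J \<Longrightarrow> is_poly m (f j)) \<Longrightarrow> is_poly m (\<Sum>j\<in>J. f j)"
  by (induction J rule: infinite_finite_induct) (simp_all add: is_poly_zero is_poly_add)

lemma is_poly_shift:
  assumes "is_poly m F" "j < m"
    and "supp G \<subseteq> (\<lambda>(\<alpha>, \<beta>). (\<alpha>(j := a \<alpha>), \<beta>(j := b \<beta>))) ` supp F"
  shows "is_poly m G"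
proof -
  have "finite (supp G)"
    using assms(1,3) unfolding is_poly_iff by (blast intro: finite_subset)
  moreover have "\<alpha> i = 0 \<and> \<beta> i = 0" if "(\<alpha>, \<beta>) \<in> supp G" "m \<le> i" for \<alpha> \<beta> i
    using that assms unfolding is_poly_iff by fastforce
  ultimately show ?thesis
    by (simp add: is_poly_iff)
qed

lemma is_poly_mulx: "j < m \<Longrightarrow> is_poly m F \<Longrightarrow> is_poly m (mulx j F)"
  by (erule is_poly_shift[where a = "\<lambda>\<alpha>. \<alpha> j + 1" and b = "\<lambda>\<beta>. \<beta> j"], assumption)
    (auto simp: supp_def mulx_def split: if_splits
      intro!: image_eqI[where x = "(\<alpha>(j := \<alpha> j - 1), \<beta>)" for \<alpha> \<beta>])

lemma is_poly_mulu: "j < m \<Longrightarrow> is_poly m F \<Longrightarrow> is_poly m (mulu j F)"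
  by (erule is_poly_shift[where a = "\<lambda>\<alpha>. \<alpha> j" and b = "\<lambda>\<beta>. \<beta> j + 1"], assumption)
    (auto simp: supp_def mulu_def split: if_splits
      intro!: image_eqI[where x = "(\<alpha>, \<beta>(j := \<beta> j - 1))" for \<alpha> \<beta>])

lemma is_poly_dx: "j < m \<Longrightarrow> is_poly m F \<Longrightarrow> is_poly m (dx j F)"
  by (erule is_poly_shift[where a = "\<lambda>\<alpha>. \<alpha> j - 1" and b = "\<lambda>\<beta>. \<beta> j"], assumption)
    (auto simp: supp_def dx_def intro!: image_eqI[where x = "(\<alpha>(j := \<alpha> j + 1), \<beta>)" for \<alpha> \<beta>])

lemma is_poly_du: "j < m \<Longrightarrow> is_poly m F \<Longrightarrow> is_poly m (du j F)"
  by (erule is_poly_shift[where a = "\<lambda>\<alpha>. \<alpha> j" and b = "\<lambda>\<beta>. \<beta> j - 1"], assumption)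
    (auto simp: supp_def du_def intro!: image_eqI[where x = "(\<alpha>, \<beta>(j := \<beta> j + 1))" for \<alpha> \<beta>])

lemma is_poly_ops:
  "is_poly m F \<Longrightarrow> is_poly m (mul_ux m F)" "is_poly m F \<Longrightarrow> is_poly m (dd_ux m F)"
  "is_poly m F \<Longrightarrow> is_poly m (x_du m F)" "is_poly m F \<Longrightarrow> is_poly m (u_dx m F)"
  "is_poly m F \<Longrightarrow> is_poly m (norm2x m F)" "is_poly m F \<Longrightarrow> is_poly m (norm2u m F)"
  "is_poly m F \<Longrightarrow> is_poly m (lap_x m F)" "is_poly m F \<Longrightarrow> is_poly m (lap_u m F)"
  unfolding sum_op_defs
  by (intro is_poly_sum is_poly_mulx is_poly_mulu is_poly_dx is_poly_du; simp)+

section \<open>The Fischer inner product\<close>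

definition fischer_weight :: "nat \<Rightarrow> (nat \<Rightarrow> nat) \<Rightarrow> (nat \<Rightarrow> nat) \<Rightarrow> nat" where
  "fischer_weight m \<alpha> \<beta> = (\<Prod>i<m. fact (\<alpha> i)) * (\<Prod>i<m. fact (\<beta> i))"

text \<open>\<open>\<langle>F, G\<rangle> = \<Sum> \<alpha>! \<beta>! F\<^sub>\<alpha>\<^sub>\<beta> conj(G\<^sub>\<alpha>\<^sub>\<beta>)\<close>, the inner product for which multiplication by \<open>x\<^sub>j\<close> is
  adjoint to \<open>\<partial>/\<partial>x\<^sub>j\<close>.\<close>

definition fischer :: "nat \<Rightarrow> cpoly \<Rightarrow> cpoly \<Rightarrow> complex" where
  "fischer m F G = (\<Sum>(\<alpha>, \<beta>)\<in>supp G. of_nat (fischer_weight m \<alpha> \<beta>) * F \<alpha> \<beta> * cnj (G \<alpha> \<beta>))"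

lemma fischer_on:
  assumes "finite S" "supp G \<subseteq> S"
  shows "fischer m F G = (\<Sum>(\<alpha>, \<beta>)\<in>S. of_nat (fischer_weight m \<alpha> \<beta>) * F \<alpha> \<beta> * cnj (G \<alpha> \<beta>))"
  unfolding fischer_def using assms by (intro sum.mono_neutral_left) (auto simp: supp_def)

lemma fischer_add_left: "fischer m (F + G) H = fischer m F H + fischer m G H"
  and fischer_scale_left: "fischer m (scale k F) H = k * fischer m F H"
  by (simp_all add: fischer_def scale_def case_prod_beta algebra_simps sum.distrib sum_distrib_left)

lemma fischer_diff_left: "fischer m (F - G) H = fischer m F H - fischer m G H"
  by (simp add: diff_eq_add_scale fischer_add_left fischer_scale_left)

lemma fischer_zero_left: "fischer m 0 H = 0"
  and fischer_zero_right: "fischer m F 0 = 0"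
  by (simp_all add: fischer_def supp_def)

lemma fischer_sum_left: "fischer m (\<Sum>a\<in>A. T a) H = (\<Sum>a\<in>A. fischer m (T a) H)"
proof (induction A rule: infinite_finite_induct)
  case (insert a A)
  have "fischer m (\<Sum>a\<in>insert a A. T a) H = fischer m (T a) H + fischer m (\<Sum>a\<in>A. T a) H"
    by (subst sum.insert[OF insert(1,2)]) (rule fischer_add_left)
  then show ?case
    by (simp only: insert.IH sum.insert[OF insert(1,2)])
qed (simp_all only: sum.empty sum.infinite fischer_zero_left not_False_eq_True)

lemma fischer_add_right:
  assumes "is_poly m G" "is_poly m H"
  shows "fischer m F (G + H) = fischer m F G + fischer m F H"
proof -
  have "finite (supp G \<union> supp H)"
    using assms by (simp add: is_poly_iff)
  moreover have "supp (G + H) \<subseteq> supp G \<union> supp H"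
    by (auto simp: supp_def)
  ultimately show ?thesis
    using fischer_on[of "supp G \<union> supp H"]
    by (simp add: case_prod_beta sum.distrib algebra_simps)
qed

lemma fischer_sum_right:
  "(\<And>a. a \<in> A \<Longrightarrow> is_poly m (T a)) \<Longrightarrow> fischer m F (\<Sum>a\<in>A. T a) = (\<Sum>a\<in>A. fischer m F (T a))"
proof (induction A rule: infinite_finite_induct)
  case (insert a A)
  have "fischer m F (\<Sum>a\<in>insert a A. T a) = fischer m F (T a) + fischer m F (\<Sum>a\<in>A. T a)"
    by (subst sum.insert[OF insert(1,2)], rule fischer_add_right) (simp_all add: insert.prems is_poly_sum)
  then show ?case
    by (simp only: insert.IH insert.prems sum.insert[OF insert(1,2)] insert_iff simp_thms)
qed (simp_all only: sum.empty sum.infinite fischer_zero_right not_False_eq_True)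

lemma prod_fact_fun_upd_Suc:
  fixes \<alpha> :: "nat \<Rightarrow> nat"
  assumes "j < m"
  shows "(\<Prod>i<m. fact ((\<alpha>(j := Suc (\<alpha> j))) i)) = (\<Prod>i<m. fact (\<alpha> i)) * (Suc (\<alpha> j) :: nat)"
proof -
  have j: "j \<in> {..<m}"
    using assms by simp
  have upd: "(\<lambda>i. fact ((\<alpha>(j := Suc (\<alpha> j))) i) :: nat) = (\<lambda>i. fact (\<alpha> i))(j := fact (Suc (\<alpha> j)))"
    by (rule ext) simp
  have "(\<Prod>i<m. fact ((\<alpha>(j := Suc (\<alpha> j))) i)) * fact (\<alpha> j) = (\<Prod>i<m. fact (\<alpha> i)) * (fact (Suc (\<alpha> j)) :: nat)"
    unfolding upd by (rule prod_fun_upd[OF finite_lessThan j])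
  also have "\<dots> = ((\<Prod>i<m. fact (\<alpha> i)) * Suc (\<alpha> j)) * fact (\<alpha> j)"
    by (simp only: fact_Suc of_nat_id mult.assoc)
  finally show ?thesis
    by simp
qed

lemma fischer_weight_Suc_x:
  "j < m \<Longrightarrow> fischer_weight m (\<alpha>(j := Suc (\<alpha> j))) \<beta> = fischer_weight m \<alpha> \<beta> * Suc (\<alpha> j)"
  unfolding fischer_weight_def by (simp only: prod_fact_fun_upd_Suc ac_simps)

lemma fischer_weight_Suc_u:
  "j < m \<Longrightarrow> fischer_weight m \<alpha> (\<beta>(j := Suc (\<beta> j))) = fischer_weight m \<alpha> \<beta> * Suc (\<beta> j)"
  unfolding fischer_weight_def by (simp only: prod_fact_fun_upd_Suc ac_simps)

lemma inj_fun_upd_Suc: "inj (\<lambda>\<gamma> :: nat \<Rightarrow> nat. \<gamma>(j := Suc (\<gamma> j)))"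
proof (rule injI)
  fix \<gamma> \<delta> :: "nat \<Rightarrow> nat"
  assume eq: "\<gamma>(j := Suc (\<gamma> j)) = \<delta>(j := Suc (\<delta> j))"
  show "\<gamma> = \<delta>"
  proof
    fix i
    show "\<gamma> i = \<delta> i"
      using fun_cong[OF eq, of i] by (cases "i = j") simp_all
  qed
qed

lemma fischer_mulx_dx:
  assumes "j < m" "is_poly m G"
  shows "fischer m (mulx j F) G = fischer m F (dx j G)"
proof -
  let ?shift = "map_prod (\<lambda>\<gamma>. \<gamma>(j := Suc (\<gamma> j))) id"
  define S where "S = supp G \<inter> {(\<alpha>, \<beta>). \<alpha> j \<noteq> 0}"
  have "fischer m (mulx j F) G
      = (\<Sum>(\<alpha>, \<beta>)\<in>S. of_nat (fischer_weight m \<alpha> \<beta>) * mulx j F \<alpha> \<beta> * cnj (G \<alpha> \<beta>))"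
    unfolding fischer_def S_def using assms(2)
    by (intro sum.mono_neutral_right) (auto simp: is_poly_iff mulx_def split: if_splits)
  also have "\<dots> = (\<Sum>(\<gamma>, \<beta>)\<in>supp (dx j G). of_nat (fischer_weight m \<gamma> \<beta>) * F \<gamma> \<beta> * cnj (dx j G \<gamma> \<beta>))"
  proof (rule sum.reindex_cong[where l = ?shift])
    show "inj_on ?shift (supp (dx j G))"
      using prod.inj_map[OF inj_fun_upd_Suc inj_on_id] by (rule inj_on_subset) simp
    show "S = ?shift ` supp (dx j G)"
    proof (intro equalityI subsetI)
      fix x assume "x \<in> S"
      then obtain \<alpha> \<beta> where "x = (\<alpha>, \<beta>)" "G \<alpha> \<beta> \<noteq> 0" "\<alpha> j \<noteq> 0"
        by (auto simp: S_def supp_def)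
      then show "x \<in> ?shift ` supp (dx j G)"
        by (intro image_eqI[where x = "(\<alpha>(j := \<alpha> j - 1), \<beta>)"]) (auto simp: supp_def dx_def)
    next
      fix x assume "x \<in> ?shift ` supp (dx j G)"
      then obtain \<gamma> \<beta> where "x = (\<gamma>(j := Suc (\<gamma> j)), \<beta>)" "dx j G \<gamma> \<beta> \<noteq> 0"
        by (auto simp: supp_def)
      then show "x \<in> S"
        by (simp add: S_def supp_def dx_def)
    qed
  next
    fix y :: "(nat \<Rightarrow> nat) \<times> (nat \<Rightarrow> nat)"
    obtain \<gamma> \<beta> where "y = (\<gamma>, \<beta>)"
      by fastforce
    then show "(case ?shift y of (\<alpha>, \<beta>) \<Rightarrow> of_nat (fischer_weight m \<alpha> \<beta>) * mulx j F \<alpha> \<beta> * cnj (G \<alpha> \<beta>))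
      = (case y of (\<gamma>, \<beta>) \<Rightarrow> of_nat (fischer_weight m \<gamma> \<beta>) * F \<gamma> \<beta> * cnj (dx j G \<gamma> \<beta>))"
      by (simp add: mulx_def dx_def fischer_weight_Suc_x[OF assms(1)] algebra_simps)
  qed
  also have "\<dots> = fischer m F (dx j G)"
    by (simp only: fischer_def)
  finally show ?thesis .
qed

lemma fischer_mulu_du:
  assumes "j < m" "is_poly m G"
  shows "fischer m (mulu j F) G = fischer m F (du j G)"
proof -
  let ?shift = "map_prod id (\<lambda>\<gamma>. \<gamma>(j := Suc (\<gamma> j)))"
  define S where "S = supp G \<inter> {(\<alpha>, \<beta>). \<beta> j \<noteq> 0}"
  have "fischer m (mulu j F) G
      = (\<Sum>(\<alpha>, \<beta>)\<in>S. of_nat (fischer_weight m \<alpha> \<beta>) * mulu j F \<alpha> \<beta> * cnj (G \<alpha> \<beta>))"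
    unfolding fischer_def S_def using assms(2)
    by (intro sum.mono_neutral_right) (auto simp: is_poly_iff mulu_def split: if_splits)
  also have "\<dots> = (\<Sum>(\<alpha>, \<gamma>)\<in>supp (du j G). of_nat (fischer_weight m \<alpha> \<gamma>) * F \<alpha> \<gamma> * cnj (du j G \<alpha> \<gamma>))"
  proof (rule sum.reindex_cong[where l = ?shift])
    show "inj_on ?shift (supp (du j G))"
      using prod.inj_map[OF inj_on_id inj_fun_upd_Suc] by (rule inj_on_subset) simp
    show "S = ?shift ` supp (du j G)"
    proof (intro equalityI subsetI)
      fix x assume "x \<in> S"
      then obtain \<alpha> \<beta> where "x = (\<alpha>, \<beta>)" "G \<alpha> \<beta> \<noteq> 0" "\<beta> j \<noteq> 0"
        by (auto simp: S_def supp_def)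
      then show "x \<in> ?shift ` supp (du j G)"
        by (intro image_eqI[where x = "(\<alpha>, \<beta>(j := \<beta> j - 1))"]) (auto simp: supp_def du_def)
    next
      fix x assume "x \<in> ?shift ` supp (du j G)"
      then obtain \<alpha> \<gamma> where "x = (\<alpha>, \<gamma>(j := Suc (\<gamma> j)))" "du j G \<alpha> \<gamma> \<noteq> 0"
        by (auto simp: supp_def)
      then show "x \<in> S"
        by (simp add: S_def supp_def du_def)
    qed
  next
    fix y :: "(nat \<Rightarrow> nat) \<times> (nat \<Rightarrow> nat)"
    obtain \<alpha> \<gamma> where "y = (\<alpha>, \<gamma>)"
      by fastforce
    then show "(case ?shift y of (\<alpha>, \<beta>) \<Rightarrow> of_nat (fischer_weight m \<alpha> \<beta>) * mulu j F \<alpha> \<beta> * cnj (G \<alpha> \<beta>))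
      = (case y of (\<alpha>, \<gamma>) \<Rightarrow> of_nat (fischer_weight m \<alpha> \<gamma>) * F \<alpha> \<gamma> * cnj (du j G \<alpha> \<gamma>))"
      by (simp add: mulu_def du_def fischer_weight_Suc_u[OF assms(1)] algebra_simps)
  qed
  also have "\<dots> = fischer m F (du j G)"
    by (simp only: fischer_def)
  finally show ?thesis .
qed

lemma fischer_norm2x_lap_x:
  assumes "is_poly m G"
  shows "fischer m (norm2x m F) G = fischer m F (lap_x m G)"
proof -
  have "fischer m (norm2x m F) G = (\<Sum>j<m. fischer m F (dx j (dx j G)))"
    by (simp add: norm2x_sum fischer_sum_left fischer_mulx_dx is_poly_dx assms)
  also have "\<dots> = fischer m F (lap_x m G)"
    unfolding lap_x_sum by (rule fischer_sum_right[symmetric]) (simp add: is_poly_dx assms)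
  finally show ?thesis .
qed

lemma fischer_norm2u_lap_u:
  assumes "is_poly m G"
  shows "fischer m (norm2u m F) G = fischer m F (lap_u m G)"
proof -
  have "fischer m (norm2u m F) G = (\<Sum>j<m. fischer m F (du j (du j G)))"
    by (simp add: norm2u_sum fischer_sum_left fischer_mulu_du is_poly_du assms)
  also have "\<dots> = fischer m F (lap_u m G)"
    unfolding lap_u_sum by (rule fischer_sum_right[symmetric]) (simp add: is_poly_du assms)
  finally show ?thesis .
qed

lemma fischer_self_eq_0:
  assumes "is_poly m D" "fischer m D D = 0"
  shows "D = 0"
proof -
  let ?S = "\<Sum>(\<alpha>, \<beta>)\<in>supp D. real (fischer_weight m \<alpha> \<beta>) * (cmod (D \<alpha> \<beta>))\<^sup>2"
  have pointwise: "of_nat (fischer_weight m \<alpha> \<beta>) * D \<alpha> \<beta> * cnj (D \<alpha> \<beta>)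
      = of_real (real (fischer_weight m \<alpha> \<beta>) * (cmod (D \<alpha> \<beta>))\<^sup>2)" for \<alpha> \<beta>
    by (simp only: of_real_mult of_real_of_nat_eq complex_norm_square mult.assoc)
  have "of_real ?S = fischer m D D"
    unfolding fischer_def of_real_sum case_prod_beta by (rule sum.cong[OF refl pointwise[symmetric]])
  also have "\<dots> = 0"
    by (rule assms(2))
  finally have "?S = 0"
    by (simp only: of_real_eq_0_iff)
  then have "\<forall>(\<alpha>, \<beta>)\<in>supp D. real (fischer_weight m \<alpha> \<beta>) * (cmod (D \<alpha> \<beta>))\<^sup>2 = 0"
    using assms(1) by (subst (asm) sum_nonneg_eq_0_iff) (auto simp: is_poly_iff)
  moreover have "fischer_weight m \<alpha> \<beta> \<noteq> 0" for \<alpha> \<beta>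
    by (simp add: fischer_weight_def)
  ultimately have "supp D = {}"
    by (auto simp: supp_def)
  then show ?thesis
    by (auto simp: supp_def fun_eq_iff)
qed

section \<open>The projection onto harmonic polynomials\<close>

definition harmonic_poly :: "nat \<Rightarrow> cpoly \<Rightarrow> bool" where
  "harmonic_poly m F \<longleftrightarrow> is_poly m F \<and> lap_x m F = 0 \<and> lap_u m F = 0"

lemma harmonic_poly_iff: "harmonic_poly m F \<longleftrightarrow> is_poly m F \<and> harm m F"
  by (simp add: harmonic_poly_def harm_def zero_poly_def zero_fun_def)

lemma harmonic_poly_zero: "harmonic_poly m 0"
  by (simp add: harmonic_poly_def is_poly_zero ops_zero)

lemma harmonic_poly_add: "harmonic_poly m F \<Longrightarrow> harmonic_poly m G \<Longrightarrow> harmonic_poly m (F + G)"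
  and harmonic_poly_diff: "harmonic_poly m F \<Longrightarrow> harmonic_poly m G \<Longrightarrow> harmonic_poly m (F - G)"
  and harmonic_poly_scale: "harmonic_poly m F \<Longrightarrow> harmonic_poly m (scale k F)"
  by (simp_all add: harmonic_poly_def is_poly_add is_poly_diff is_poly_scale
      ops_add ops_diff ops_scale)

lemma harmonic_poly_dd_ux: "harmonic_poly m F \<Longrightarrow> harmonic_poly m (dd_ux m F)"
  by (simp add: harmonic_poly_def is_poly_ops lap_x_dd_ux lap_u_dd_ux ops_zero)

definition fischer_decomp :: "nat \<Rightarrow> cpoly \<Rightarrow> nat \<Rightarrow> (nat \<Rightarrow> nat \<Rightarrow> cpoly) \<Rightarrow> bool" where
  "fischer_decomp m P N H \<longleftrightarrow> (\<forall>a b. is_poly m (H a b) \<and> harm m (H a b)) \<and>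
      (\<forall>a b. N \<le> a \<or> N \<le> b \<longrightarrow> H a b = zero_poly) \<and>
      P = (\<lambda>\<alpha> \<beta>. \<Sum>a<N. \<Sum>b<N. ((norm2x m ^^ a) ((norm2u m ^^ b) (H a b))) \<alpha> \<beta>)"

lemma pis_eq_The: "pis m P = (THE h. \<exists>N H. fischer_decomp m P N H \<and> h = H 0 0)"
  by (simp add: pis_def fischer_decomp_def)

lemma sum_delta_0_0:
  fixes c :: "'a::comm_monoid_add" and N :: nat
  shows "(\<Sum>a<N. \<Sum>b<N. if a = 0 then if b = 0 then c else 0 else 0) = (if N = 0 then 0 else c)"
proof -
  have delta: "(\<Sum>a<N. if a = 0 then d else 0) = (if N = 0 then 0 else d)" for d :: 'a
    using sum.delta[of "{..<N}" 0 "\<lambda>_. d"] by auto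
  have "(\<Sum>a<N. \<Sum>b<N. if a = 0 then if b = 0 then c else 0 else 0)
      = (\<Sum>a<N. if a = 0 then (\<Sum>b<N. if b = 0 then c else 0) else 0)"
    by (rule sum.cong) simp_all
  then show ?thesis
    by (simp only: delta) simp
qed

text \<open>Multiplication by \<open>|x|\<^sup>2\<close> is adjoint to \<open>\<Delta>\<^sub>x\<close>, so all terms but \<open>H 0 0\<close> of a decomposition
  are orthogonal to harmonic polynomials.\<close>

lemma fischer_decomp_fischer:
  assumes "fischer_decomp m P N H" "harmonic_poly m D"
  shows "fischer m P D = fischer m (H 0 0) D"
proof -
  have orth: "fischer m ((norm2x m ^^ a) ((norm2u m ^^ b) X)) D = 0" if "a \<noteq> 0 \<or> b \<noteq> 0" for a b X
  proof (cases a)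
    case (Suc a')
    then show ?thesis
      using assms(2) by (simp add: fischer_norm2x_lap_x harmonic_poly_def fischer_zero_right)
  next
    case 0
    with that obtain b' where "b = Suc b'"
      by (cases b) auto
    with 0 show ?thesis
      using assms(2) by (simp add: fischer_norm2u_lap_u harmonic_poly_def fischer_zero_right)
  qed
  have terms: "fischer m ((norm2x m ^^ a) ((norm2u m ^^ b) (H a b))) D
      = (if a = 0 then if b = 0 then fischer m (H 0 0) D else 0 else 0)" for a b
    using orth[of a b "H a b"] by auto
  have "P = (\<Sum>a<N. \<Sum>b<N. (norm2x m ^^ a) ((norm2u m ^^ b) (H a b)))"
    using assms(1) by (simp add: fischer_decomp_def sum_poly_eta)
  then have "fischer m P D = (\<Sum>a<N. \<Sum>b<N. if a = 0 then if b = 0 then fischer m (H 0 0) D else 0 else 0)"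
    by (simp only: fischer_sum_left terms)
  also have "\<dots> = (if N = 0 then 0 else fischer m (H 0 0) D)"
    by (rule sum_delta_0_0)
  also have "\<dots> = fischer m (H 0 0) D"
    using assms(1) by (auto simp: fischer_decomp_def zero_poly_def fischer_zero_left[unfolded zero_fun_def])
  finally show ?thesis .
qed

lemma fischer_decomp_unique:
  assumes "fischer_decomp m P N H" "fischer_decomp m P N' H'"
  shows "H 0 0 = H' 0 0"
proof -
  define D where "D = H 0 0 - H' 0 0"
  have "harmonic_poly m (H 0 0)" "harmonic_poly m (H' 0 0)"
    using assms by (simp_all add: fischer_decomp_def harmonic_poly_iff)
  then have D: "harmonic_poly m D"
    unfolding D_def by (rule harmonic_poly_diff)
  have "fischer m (H 0 0) D = fischer m (H' 0 0) D"
    using fischer_decomp_fischer[OF assms(1) D] fischer_decomp_fischer[OF assms(2) D] by simp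
  then have "fischer m D D = 0"
    by (simp add: D_def fischer_diff_left)
  with D have "D = 0"
    by (intro fischer_self_eq_0) (simp_all add: harmonic_poly_def)
  then show ?thesis
    by (simp add: D_def)
qed

lemma pis_fischer_decomp: "fischer_decomp m P N H \<Longrightarrow> pis m P = H 0 0"
  unfolding pis_eq_The by (rule the_equality) (auto dest: fischer_decomp_unique)

definition harmonic_part :: "nat \<Rightarrow> cpoly \<Rightarrow> cpoly \<Rightarrow> bool" where
  "harmonic_part m T h \<longleftrightarrow> harmonic_poly m h \<and> (\<exists>h1 h2 h3. harmonic_poly m h1 \<and> harmonic_poly m h2 \<and>
     harmonic_poly m h3 \<and> T = h + norm2x m h1 + norm2u m h2 + norm2x m (norm2u m h3))"

lemma pis_harmonic_part:
  assumes "harmonic_part m T h"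
  shows "pis m T = h"
proof -
  obtain h1 h2 h3 where h: "harmonic_poly m h" "harmonic_poly m h1" "harmonic_poly m h2" "harmonic_poly m h3"
    and T: "T = h + norm2x m h1 + norm2u m h2 + norm2x m (norm2u m h3)"
    using assms by (auto simp: harmonic_part_def)
  define H where "H a b = (if a = 0 \<and> b = 0 then h else if a = 1 \<and> b = 0 then h1
    else if a = 0 \<and> b = 1 then h2 else if a = 1 \<and> b = 1 then h3 else 0)" for a b :: nat
  have "fischer_decomp m T 2 H"
    unfolding fischer_decomp_def
  proof (intro conjI allI impI)
    show "is_poly m (H a b)" "harm m (H a b)" for a b
      using h harmonic_poly_zero by (simp_all add: H_def harmonic_poly_iff)
    show "H a b = zero_poly" if "2 \<le> a \<or> 2 \<le> b" for a b
      using that by (auto simp: H_def zero_poly_def zero_fun_def)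
    show "T = (\<lambda>\<alpha> \<beta>. \<Sum>a<2. \<Sum>b<2. ((norm2x m ^^ a) ((norm2u m ^^ b) (H a b))) \<alpha> \<beta>)"
      unfolding T by (simp add: fun_eq_iff numeral_2_eq_2 H_def norm2u_norm2x algebra_simps)
  qed
  then show ?thesis
    by (simp add: pis_fischer_decomp H_def)
qed

lemma harmonic_part_self: "harmonic_poly m h \<Longrightarrow> harmonic_part m h h"
  unfolding harmonic_part_def using harmonic_poly_zero by (intro conjI exI[of _ 0]) (simp_all add: ops_zero)

lemma harmonic_part_add:
  assumes "harmonic_part m T h" "harmonic_part m T' h'"
  shows "harmonic_part m (T + T') (h + h')"
proof -
  obtain h1 h2 h3 where h: "harmonic_poly m h1" "harmonic_poly m h2" "harmonic_poly m h3"
    and T: "T = h + norm2x m h1 + norm2u m h2 + norm2x m (norm2u m h3)"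
    using assms(1) by (auto simp: harmonic_part_def)
  obtain h1' h2' h3' where h': "harmonic_poly m h1'" "harmonic_poly m h2'" "harmonic_poly m h3'"
    and T': "T' = h' + norm2x m h1' + norm2u m h2' + norm2x m (norm2u m h3')"
    using assms(2) by (auto simp: harmonic_part_def)
  have "T + T' = (h + h') + norm2x m (h1 + h1') + norm2u m (h2 + h2') + norm2x m (norm2u m (h3 + h3'))"
    unfolding T T' by (simp add: ops_add algebra_simps)
  moreover have "harmonic_poly m (h + h')"
    using assms by (simp add: harmonic_part_def harmonic_poly_add)
  ultimately show ?thesis
    unfolding harmonic_part_def using h h' by (blast intro: harmonic_poly_add)
qed

lemma harmonic_part_harmonic_poly: "harmonic_part m T h \<Longrightarrow> harmonic_poly m h"
  by (simp add: harmonic_part_def)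

section \<open>Harmonic parts of bihomogeneous harmonic polynomials\<close>

text \<open>\<open>\<Delta>\<^sub>x(|x|\<^sup>2 H) = 2 \<kappa> m p H\<close> for harmonic \<open>H\<close> of degree \<open>p - 1\<close> in \<open>x\<close>.\<close>

definition kappa :: "nat \<Rightarrow> int \<Rightarrow> complex" where
  "kappa m p = 2 * of_int p + of_nat m - 2"

definition Sx_harm :: "nat \<Rightarrow> int \<Rightarrow> cpoly \<Rightarrow> cpoly" where
  "Sx_harm m p G = x_du m G - scale (1 / kappa m p) (norm2x m (dd_ux m G))"

definition Su_harm :: "nat \<Rightarrow> int \<Rightarrow> cpoly \<Rightarrow> cpoly" where
  "Su_harm m q G = u_dx m G - scale (1 / kappa m q) (norm2u m (dd_ux m G))"

definition C_harm :: "nat \<Rightarrow> int \<Rightarrow> int \<Rightarrow> cpoly \<Rightarrow> cpoly" where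
  "C_harm m p q G = mul_ux m G - scale (1 / kappa m p) (norm2x m (Su_harm m q G))
     - scale (1 / kappa m q) (norm2u m (Sx_harm m p G))
     - scale (1 / (kappa m p * kappa m q)) (norm2x m (norm2u m (dd_ux m G)))"

lemmas op_simps = weyl_relations ops_add ops_diff ops_scale ops_zero

lemma harmonic_poly_Sx_harm:
  assumes "harmonic_poly m G" "homog_x m p G" "kappa m p \<noteq> 0"
  shows "harmonic_poly m (Sx_harm m p G)"
proof -
  have h: "lap_x m G = 0" "lap_u m G = 0" "is_poly m G"
    using assms(1) by (simp_all add: harmonic_poly_def)
  have e: "euler_x m (dd_ux m G) = scale (of_int (p - 1)) (dd_ux m G)"
    by (rule euler_x_homog[OF homog_x_dd_ux[OF assms(2)]])
  have "lap_x m (Sx_harm m p G) = 0"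
    unfolding Sx_harm_def using assms(3)
    by (simp add: op_simps h e) (simp add: fun_eq_iff scale_def kappa_def field_simps)
  moreover have "lap_u m (Sx_harm m p G) = 0"
    unfolding Sx_harm_def by (simp add: op_simps h)
  ultimately show ?thesis
    using h by (simp add: harmonic_poly_def Sx_harm_def is_poly_diff is_poly_scale is_poly_ops)
qed

lemma harmonic_poly_Su_harm:
  assumes "harmonic_poly m G" "homog_u m q G" "kappa m q \<noteq> 0"
  shows "harmonic_poly m (Su_harm m q G)"
proof -
  have h: "lap_x m G = 0" "lap_u m G = 0" "is_poly m G"
    using assms(1) by (simp_all add: harmonic_poly_def)
  have e: "euler_u m (dd_ux m G) = scale (of_int (q - 1)) (dd_ux m G)"
    by (rule euler_u_homog[OF homog_u_dd_ux[OF assms(2)]])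
  have "lap_u m (Su_harm m q G) = 0"
    unfolding Su_harm_def using assms(3)
    by (simp add: op_simps h e) (simp add: fun_eq_iff scale_def kappa_def field_simps)
  moreover have "lap_x m (Su_harm m q G) = 0"
    unfolding Su_harm_def by (simp add: op_simps h)
  ultimately show ?thesis
    using h by (simp add: harmonic_poly_def Su_harm_def is_poly_diff is_poly_scale is_poly_ops)
qed

lemma harmonic_poly_C_harm:
  assumes "harmonic_poly m G" "homog_x m p G" "homog_u m q G" "kappa m p \<noteq> 0" "kappa m q \<noteq> 0"
  shows "harmonic_poly m (C_harm m p q G)"
proof -
  have h: "lap_x m G = 0" "lap_u m G = 0" "is_poly m G"
    using assms(1) by (simp_all add: harmonic_poly_def)
  have e: "euler_x m (u_dx m G) = scale (of_int (p - 1)) (u_dx m G)"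
    "euler_x m (norm2u m (dd_ux m G)) = scale (of_int (p - 1)) (norm2u m (dd_ux m G))"
    "euler_x m (dd_ux m G) = scale (of_int (p - 1)) (dd_ux m G)"
    "euler_u m (x_du m G) = scale (of_int (q - 1)) (x_du m G)"
    "euler_u m (norm2x m (dd_ux m G)) = scale (of_int (q - 1)) (norm2x m (dd_ux m G))"
    "euler_u m (dd_ux m G) = scale (of_int (q - 1)) (dd_ux m G)"
    by (intro euler_x_homog euler_u_homog homog_x_u_dx homog_x_norm2u homog_x_dd_ux
        homog_u_x_du homog_u_norm2x homog_u_dd_ux assms(2,3))+
  have "lap_x m (C_harm m p q G) = 0"
    unfolding C_harm_def Sx_harm_def Su_harm_def using assms(4,5)
    by (simp add: op_simps h e) (simp add: fun_eq_iff scale_def field_simps, simp add: kappa_def algebra_simps)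
  moreover have "lap_u m (C_harm m p q G) = 0"
    unfolding C_harm_def Sx_harm_def Su_harm_def using assms(4,5)
    by (simp add: op_simps h e) (simp add: fun_eq_iff scale_def field_simps, simp add: kappa_def algebra_simps)
  ultimately show ?thesis
    using h by (simp add: harmonic_poly_def C_harm_def Sx_harm_def Su_harm_def is_poly_diff
        is_poly_scale is_poly_ops)
qed

lemma harmonic_part_x_du:
  assumes "harmonic_poly m G" "homog_x m p G" "kappa m p \<noteq> 0"
  shows "harmonic_part m (x_du m G) (Sx_harm m p G)"
proof -
  have "x_du m G = Sx_harm m p G + norm2x m (scale (1 / kappa m p) (dd_ux m G)) + norm2u m 0 + norm2x m (norm2u m 0)"
    by (simp add: Sx_harm_def ops_scale ops_zero)
  then show ?thesis
    unfolding harmonic_part_def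
    using harmonic_poly_Sx_harm[OF assms] harmonic_poly_zero harmonic_poly_scale[OF harmonic_poly_dd_ux[OF assms(1)]]
    by blast
qed

lemma harmonic_part_u_dx:
  assumes "harmonic_poly m G" "homog_u m q G" "kappa m q \<noteq> 0"
  shows "harmonic_part m (u_dx m G) (Su_harm m q G)"
proof -
  have "u_dx m G = Su_harm m q G + norm2x m 0 + norm2u m (scale (1 / kappa m q) (dd_ux m G)) + norm2x m (norm2u m 0)"
    by (simp add: Su_harm_def ops_scale ops_zero)
  then show ?thesis
    unfolding harmonic_part_def
    using harmonic_poly_Su_harm[OF assms] harmonic_poly_zero harmonic_poly_scale[OF harmonic_poly_dd_ux[OF assms(1)]]
    by blast
qed

lemma harmonic_part_mul_ux:
  assumes "harmonic_poly m G" "homog_x m p G" "homog_u m q G" "kappa m p \<noteq> 0" "kappa m q \<noteq> 0"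
  shows "harmonic_part m (mul_ux m G) (C_harm m p q G)"
proof -
  have "mul_ux m G = C_harm m p q G + norm2x m (scale (1 / kappa m p) (Su_harm m q G))
      + norm2u m (scale (1 / kappa m q) (Sx_harm m p G))
      + norm2x m (norm2u m (scale (1 / (kappa m p * kappa m q)) (dd_ux m G)))"
    by (simp add: C_harm_def ops_scale)
  then show ?thesis
    unfolding harmonic_part_def
    using harmonic_poly_C_harm[OF assms] harmonic_poly_Su_harm[OF assms(1,3,5)]
      harmonic_poly_Sx_harm[OF assms(1,2,4)] harmonic_poly_dd_ux[OF assms(1)]
    by (blast intro: harmonic_poly_scale)
qed

lemma homog_x_norm2x_minus_one: "homog_x m (p - 1) F \<Longrightarrow> homog_x m (p + 1) (norm2x m F)"
  and homog_u_norm2u_minus_one: "homog_u m (q - 1) F \<Longrightarrow> homog_u m (q + 1) (norm2u m F)"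
  using homog_x_norm2x[of m "p - 1" F] homog_u_norm2u[of m "q - 1" F]
  by (simp_all add: add.commute)

lemma homog_x_Sx_harm: "homog_x m p G \<Longrightarrow> homog_x m (p + 1) (Sx_harm m k G)"
  and homog_u_Su_harm: "homog_u m q G \<Longrightarrow> homog_u m (q + 1) (Su_harm m k G)"
  unfolding Sx_harm_def Su_harm_def
  by (intro homog_x_diff homog_u_diff homog_x_scale homog_u_scale homog_x_x_du homog_u_u_dx
      homog_x_norm2x_minus_one homog_u_norm2u_minus_one homog_x_dd_ux homog_u_dd_ux; assumption)+

lemma homog_u_Sx_harm: "homog_u m q G \<Longrightarrow> homog_u m (q - 1) (Sx_harm m k G)"
  and homog_x_Su_harm: "homog_x m p G \<Longrightarrow> homog_x m (p - 1) (Su_harm m k G)"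
  unfolding Sx_harm_def Su_harm_def
  by (intro homog_x_diff homog_u_diff homog_x_scale homog_u_scale homog_u_x_du homog_x_u_dx
      homog_u_norm2x homog_x_norm2u homog_u_dd_ux homog_x_dd_ux; assumption)+

lemma homog_x_C_harm: "homog_x m p G \<Longrightarrow> homog_x m (p + 1) (C_harm m k l G)"
  unfolding C_harm_def
  by (intro homog_x_diff homog_x_scale homog_x_mul_ux homog_x_norm2x_minus_one homog_x_norm2u
      homog_x_Su_harm homog_x_Sx_harm homog_x_dd_ux; assumption)+

lemma homog_u_C_harm: "homog_u m q G \<Longrightarrow> homog_u m (q + 1) (C_harm m k l G)"
  unfolding C_harm_def
  by (intro homog_u_diff homog_u_scale homog_u_mul_ux homog_u_norm2u_minus_one homog_u_norm2x
      homog_u_Su_harm homog_u_Sx_harm homog_u_dd_ux; assumption)+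

text \<open>Here \<open>hx\<close>, \<open>hu\<close> are the eigenvalues of \<open>H\<^sub>x\<close>, \<open>H\<^sub>u\<close> on the output, of bidegree \<open>(p, q)\<close>.
  Once the Weyl relations have moved every \<open>\<langle>\<partial>\<^sub>u, \<partial>\<^sub>x\<rangle>\<close> to the right, where it meets
  \<open>\<Delta>\<^sub>x G = \<Delta>\<^sub>u G = 0\<close>, both sides are combinations of the same few operator words applied to \<open>G\<close>.\<close>

lemma dd_ux_C_harm:
  assumes "harmonic_poly m G" "homog_x m p G" "homog_u m q G"
    and nz: "kappa m p \<noteq> 0" "kappa m q \<noteq> 0" "kappa m (p - 1) \<noteq> 0" "kappa m (q - 1) \<noteq> 0"
  defines "hx \<equiv> - (of_int p + of_nat m / 2 :: complex)" and "hu \<equiv> - (of_int q + of_nat m / 2 :: complex)"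
  shows "dd_ux m (C_harm m p q G) =
     scale ((hx + hx * hu + hu) / ((hx + 1) * (hu + 1))) (C_harm m (p - 1) (q - 1) (dd_ux m G))
     - scale (hx + hu) G + scale (1 / (hx + 1)) (Sx_harm m (p - 1) (Su_harm m q G))
     + scale (1 / (hu + 1)) (Su_harm m (q - 1) (Sx_harm m p G))"
proof -
  have h: "lap_x m G = 0" "lap_u m G = 0"
    using assms(1) by (simp_all add: harmonic_poly_def)
  have e: "euler_x m G = scale (of_int p) G" "euler_u m G = scale (of_int q) G"
    using euler_x_homog[OF assms(2)] euler_u_homog[OF assms(3)] .
  have hx1: "hx + 1 = - kappa m p / 2" and hu1: "hu + 1 = - kappa m q / 2"
    unfolding hx_def hu_def kappa_def by (simp_all add: field_simps)
  have hxu: "hx + hu = - (of_int p + of_int q + of_nat m)"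
    unfolding hx_def hu_def by (simp add: field_simps)
  have k0: "hx + hx * hu + hu = (hx + 1) * (hu + 1) - 1"
    by (simp add: algebra_simps)
  have k1: "(hx + 1) * (hu + 1) = kappa m p * kappa m q / 4"
    by (simp add: hx1 hu1)
  have k: "(hx + hx * hu + hu) / ((hx + 1) * (hu + 1)) = 1 - 4 / (kappa m p * kappa m q)"
    unfolding k0 k1 using nz(1,2) by (simp add: field_simps)
  have r1: "kappa m (p - 1) = kappa m p - 2" "kappa m (q - 1) = kappa m q - 2"
    by (simp_all add: kappa_def algebra_simps)
  have r2: "of_int p = (kappa m p - of_nat m + 2) / 2" "of_int q = (kappa m q - of_nat m + 2) / 2"
    by (simp_all add: kappa_def field_simps)
  show ?thesis
    unfolding k unfolding hxu hx1 hu1 C_harm_def Sx_harm_def Su_harm_def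
    by (simp add: op_simps h e, simp add: fun_eq_iff scale_def r2, use nz in \<open>simp add: field_simps\<close>,
        simp add: r1 algebra_simps)
qed

section \<open>Decomposition into bihomogeneous components\<close>

definition bihom_part :: "nat \<Rightarrow> nat \<Rightarrow> nat \<Rightarrow> cpoly \<Rightarrow> cpoly" where
  "bihom_part m p q F = (\<lambda>\<alpha> \<beta>. if (\<Sum>i<m. \<alpha> i) = p \<and> (\<Sum>i<m. \<beta> i) = q then F \<alpha> \<beta> else 0)"

lemma homog_bihom_part: "homog_x m (int p) (bihom_part m p q F)" "homog_u m (int q) (bihom_part m p q F)"
  by (simp_all add: homog_x_def homog_u_def bihom_part_def del: of_nat_sum)

lemma is_poly_bihom_part: "is_poly m F \<Longrightarrow> is_poly m (bihom_part m p q F)"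
  by (rule is_poly_supp_subset[of m F F]) (auto simp: supp_def bihom_part_def)

lemma degree_fun_upd_Suc:
  fixes \<alpha> :: "nat \<Rightarrow> nat"
  shows "j < m \<Longrightarrow> (\<Sum>i<m. (\<alpha>(j := \<alpha> j + 1)) i) = (\<Sum>i<m. \<alpha> i) + 1"
  using degree_fun_upd[of j m \<alpha> "\<alpha> j + 1"] by simp

lemma dx_restrict:
  assumes "j < m"
  shows "dx j (\<lambda>\<alpha> \<beta>. if P (\<Sum>i<m. \<alpha> i) (\<Sum>i<m. \<beta> i) then F \<alpha> \<beta> else 0)
    = (\<lambda>\<alpha> \<beta>. if P ((\<Sum>i<m. \<alpha> i) + 1) (\<Sum>i<m. \<beta> i) then dx j F \<alpha> \<beta> else 0)"
  by (simp only: dx_def degree_fun_upd_Suc[OF assms]) (simp add: fun_eq_iff)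

lemma du_restrict:
  assumes "j < m"
  shows "du j (\<lambda>\<alpha> \<beta>. if P (\<Sum>i<m. \<alpha> i) (\<Sum>i<m. \<beta> i) then F \<alpha> \<beta> else 0)
    = (\<lambda>\<alpha> \<beta>. if P (\<Sum>i<m. \<alpha> i) ((\<Sum>i<m. \<beta> i) + 1) then du j F \<alpha> \<beta> else 0)"
  by (simp only: du_def degree_fun_upd_Suc[OF assms]) (simp add: fun_eq_iff)

lemma lap_x_restrict:
  "lap_x m (\<lambda>\<alpha> \<beta>. if P (\<Sum>i<m. \<alpha> i) (\<Sum>i<m. \<beta> i) then F \<alpha> \<beta> else 0)
    = (\<lambda>\<alpha> \<beta>. if P ((\<Sum>i<m. \<alpha> i) + 2) (\<Sum>i<m. \<beta> i) then lap_x m F \<alpha> \<beta> else 0)"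
proof -
  have "dx j (dx j (\<lambda>\<alpha> \<beta>. if P (\<Sum>i<m. \<alpha> i) (\<Sum>i<m. \<beta> i) then F \<alpha> \<beta> else 0))
      = (\<lambda>\<alpha> \<beta>. if P ((\<Sum>i<m. \<alpha> i) + 2) (\<Sum>i<m. \<beta> i) then dx j (dx j F) \<alpha> \<beta> else 0)" if "j < m" for j
    using dx_restrict[OF that, where P = P] dx_restrict[OF that, where P = "\<lambda>a b. P (a + 1) b"]
    by (simp add: numeral_2_eq_2)
  then show ?thesis
    by (simp add: lap_x_def fun_eq_iff if_distrib[of "\<lambda>G. G _ _"] sum.If_cases)
qed

lemma lap_u_restrict:
  "lap_u m (\<lambda>\<alpha> \<beta>. if P (\<Sum>i<m. \<alpha> i) (\<Sum>i<m. \<beta> i) then F \<alpha> \<beta> else 0)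
    = (\<lambda>\<alpha> \<beta>. if P (\<Sum>i<m. \<alpha> i) ((\<Sum>i<m. \<beta> i) + 2) then lap_u m F \<alpha> \<beta> else 0)"
proof -
  have "du j (du j (\<lambda>\<alpha> \<beta>. if P (\<Sum>i<m. \<alpha> i) (\<Sum>i<m. \<beta> i) then F \<alpha> \<beta> else 0))
      = (\<lambda>\<alpha> \<beta>. if P (\<Sum>i<m. \<alpha> i) ((\<Sum>i<m. \<beta> i) + 2) then du j (du j F) \<alpha> \<beta> else 0)" if "j < m" for j
    using du_restrict[OF that, where P = P] du_restrict[OF that, where P = "\<lambda>a b. P a (b + 1)"]
    by (simp add: numeral_2_eq_2)
  then show ?thesis
    by (simp add: lap_u_def fun_eq_iff if_distrib[of "\<lambda>G. G _ _"] sum.If_cases)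
qed

lemma harmonic_poly_bihom_part: "harmonic_poly m F \<Longrightarrow> harmonic_poly m (bihom_part m p q F)"
  unfolding harmonic_poly_def bihom_part_def
  by (simp add: lap_x_restrict[where P = "\<lambda>a b. a = p \<and> b = q"] lap_u_restrict[where P = "\<lambda>a b. a = p \<and> b = q"]
      is_poly_bihom_part[unfolded bihom_part_def] fun_eq_iff)

lemma bihom_decomposition:
  assumes "is_poly m P"
  obtains K where "finite K" "P = (\<Sum>(p, q)\<in>K. bihom_part m p q P)"
proof
  let ?K = "(\<lambda>(\<alpha>, \<beta>). (\<Sum>i<m. \<alpha> i, \<Sum>i<m. \<beta> i)) ` supp P"
  show "finite ?K"
    using assms by (simp add: is_poly_iff)
  have "(\<Sum>(p, q)\<in>?K. bihom_part m p q P) \<alpha> \<beta> = P \<alpha> \<beta>" for \<alpha> \<beta>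
  proof -
    have "(\<Sum>(p, q)\<in>?K. bihom_part m p q P) \<alpha> \<beta>
        = (\<Sum>k\<in>?K. if k = (\<Sum>i<m. \<alpha> i, \<Sum>i<m. \<beta> i) then P \<alpha> \<beta> else 0)"
      unfolding sum_poly_apply by (rule sum.cong) (auto simp: bihom_part_def split: if_splits)
    also have "\<dots> = P \<alpha> \<beta>"
      using \<open>finite ?K\<close> by (force simp: supp_def)
    finally show ?thesis .
  qed
  then show "P = (\<Sum>(p, q)\<in>?K. bihom_part m p q P)"
    by (simp add: fun_eq_iff)
qed

text \<open>Everything below is additive on harmonic polynomials, so it suffices to treat
  bihomogeneous ones.\<close>

lemma harmonic_poly_bihom_induct [consumes 1, case_names add bihom]:
  assumes "harmonic_poly m P"
    and add: "\<And>F G. harmonic_poly m F \<Longrightarrow> harmonic_poly m G \<Longrightarrow> \<Phi> F \<Longrightarrow> \<Phi> G \<Longrightarrow> \<Phi> (F + G)"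
    and bihom: "\<And>p q G. harmonic_poly m G \<Longrightarrow> homog_x m (int p) G \<Longrightarrow> homog_u m (int q) G \<Longrightarrow> \<Phi> G"
  shows "\<Phi> P"
proof -
  obtain K where K: "finite K" "P = (\<Sum>(p, q)\<in>K. bihom_part m p q P)"
    using assms(1) bihom_decomposition by (auto simp: harmonic_poly_def)
  have "harmonic_poly m (\<Sum>(p, q)\<in>K'. bihom_part m p q P) \<and> \<Phi> (\<Sum>(p, q)\<in>K'. bihom_part m p q P)"
    if "finite K'" for K'
    using that
  proof (induction K' rule: finite_induct)
    case empty
    have "homog_x m (int 0) 0" "homog_u m (int 0) 0"
      by (simp_all add: homog_x_def homog_u_def)
    then show ?case
      using bihom harmonic_poly_zero by (simp only: sum.empty)
  next
    case (insert k K')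
    obtain p q where k: "k = (p, q)"
      by fastforce
    have "harmonic_poly m (bihom_part m p q P)"
      using assms(1) by (rule harmonic_poly_bihom_part)
    moreover have "\<Phi> (bihom_part m p q P)"
      using calculation homog_bihom_part by (rule bihom)
    moreover have "(\<Sum>(p, q)\<in>insert k K'. bihom_part m p q P) = bihom_part m p q P + (\<Sum>(p, q)\<in>K'. bihom_part m p q P)"
      using insert k by simp
    ultimately show ?case
      using insert.IH by (metis harmonic_poly_add add)
  qed
  then show ?thesis
    using K by metis
qed

lemma kappa_nonzero: "2 < int m + 2 * p \<Longrightarrow> kappa m p \<noteq> 0"
proof -
  assume "2 < int m + 2 * p"
  moreover have "kappa m p = of_int (2 * p + int m - 2)"
    by (simp add: kappa_def)
  ultimately show ?thesis
    by (simp only: of_int_eq_0_iff)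
qed

lemma harmonic_part_pis:
  assumes "linear_op T" "harmonic_poly m F"
    and bihom: "\<And>p q G. harmonic_poly m G \<Longrightarrow> homog_x m (int p) G \<Longrightarrow> homog_u m (int q) G \<Longrightarrow>
      \<exists>h. harmonic_part m (T G) h"
  shows "harmonic_part m (T F) (pis m (T F))"
proof -
  have "\<exists>h. harmonic_part m (T F) h"
    using assms(2)
  proof (induction F rule: harmonic_poly_bihom_induct)
    case (add F G)
    then obtain h h' where "harmonic_part m (T F) h" "harmonic_part m (T G) h'"
      by blast
    then have "harmonic_part m (T (F + G)) (h + h')"
      unfolding linear_op_add[OF assms(1)] by (rule harmonic_part_add)
    then show ?case
      by blast
  qed (rule bihom)
  then show ?thesis
    using pis_harmonic_part by metis
qed

lemma harmonic_part_Sx: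
  assumes "2 < m" "harmonic_poly m F"
  shows "harmonic_part m (x_du m F) (Sx m F)"
  unfolding Sx_eq
proof (rule harmonic_part_pis[OF linear_ops(3) assms(2)])
  fix p q G
  assume "harmonic_poly m G" "homog_x m (int p) G"
  moreover have "kappa m (int p) \<noteq> 0"
    using assms(1) by (intro kappa_nonzero) simp
  ultimately show "\<exists>h. harmonic_part m (x_du m G) h"
    by (blast intro: harmonic_part_x_du)
qed

lemma harmonic_part_Su:
  assumes "2 < m" "harmonic_poly m F"
  shows "harmonic_part m (u_dx m F) (Su m F)"
  unfolding Su_eq
proof (rule harmonic_part_pis[OF linear_ops(4) assms(2)])
  fix p q G
  assume "harmonic_poly m G" "homog_u m (int q) G"
  moreover have "kappa m (int q) \<noteq> 0"
    using assms(1) by (intro kappa_nonzero) simp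
  ultimately show "\<exists>h. harmonic_part m (u_dx m G) h"
    by (blast intro: harmonic_part_u_dx)
qed

lemma harmonic_part_Cop:
  assumes "2 < m" "harmonic_poly m F"
  shows "harmonic_part m (mul_ux m F) (Cop m F)"
  unfolding Cop_eq
proof (rule harmonic_part_pis[OF linear_ops(1) assms(2)])
  fix p q G
  assume "harmonic_poly m G" "homog_x m (int p) G" "homog_u m (int q) G"
  moreover have "kappa m (int p) \<noteq> 0" "kappa m (int q) \<noteq> 0"
    using assms(1) by (intro kappa_nonzero; simp)+
  ultimately show "\<exists>h. harmonic_part m (mul_ux m G) h"
    by (blast intro: harmonic_part_mul_ux)
qed

lemma Aop_harmonic: "harmonic_poly m F \<Longrightarrow> Aop m F = dd_ux m F"
  unfolding Aop_eq by (intro pis_harmonic_part harmonic_part_self harmonic_poly_dd_ux)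

lemma pis_add:
  "harmonic_part m A (pis m A) \<Longrightarrow> harmonic_part m B (pis m B) \<Longrightarrow> pis m (A + B) = pis m A + pis m B"
  by (rule pis_harmonic_part[OF harmonic_part_add])

lemma ops_harmonic_add:
  assumes "2 < m" "harmonic_poly m F" "harmonic_poly m G"
  shows "Aop m (F + G) = Aop m F + Aop m G" "Cop m (F + G) = Cop m F + Cop m G"
    "Sx m (F + G) = Sx m F + Sx m G" "Su m (F + G) = Su m F + Su m G"
  using assms harmonic_part_Cop[OF assms(1)] harmonic_part_Sx[OF assms(1)] harmonic_part_Su[OF assms(1)]
  by (simp_all add: Aop_harmonic harmonic_poly_add ops_add Cop_eq Sx_eq Su_eq pis_add)

lemma harmonic_poly_ops:
  assumes "2 < m" "harmonic_poly m F"
  shows "harmonic_poly m (Aop m F)" "harmonic_poly m (Cop m F)"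
    "harmonic_poly m (Sx m F)" "harmonic_poly m (Su m F)"
  using assms harmonic_part_Cop[OF assms] harmonic_part_Sx[OF assms] harmonic_part_Su[OF assms]
  by (simp_all add: Aop_harmonic harmonic_poly_dd_ux harmonic_part_harmonic_poly)

lemma Aop_Cop_bihomog:
  fixes p q :: int
  assumes "4 < m" "harmonic_poly m G" "homog_x m p G" "homog_u m q G" "0 \<le> p" "0 \<le> q"
  shows "Aop m (Cop m G) =
    diagop m (\<lambda>hx hu. (hx + hx * hu + hu) / ((hx + 1) * (hu + 1))) (Cop m (Aop m G))
    - diagop m (\<lambda>hx hu. hx + hu) G
    + diagop m (\<lambda>hx hu. 1 / (hx + 1)) (Sx m (Su m G))
    + diagop m (\<lambda>hx hu. 1 / (hu + 1)) (Su m (Sx m G))"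
proof -
  have nz: "kappa m p \<noteq> 0" "kappa m q \<noteq> 0" "kappa m (p - 1) \<noteq> 0" "kappa m (q - 1) \<noteq> 0"
    using assms(1,5,6) by (intro kappa_nonzero; simp)+
  note G = assms(2-4)
  note dG = harmonic_poly_dd_ux[OF G(1)] homog_x_dd_ux[OF G(2)] homog_u_dd_ux[OF G(3)]
  have Cop: "Cop m G = C_harm m p q G"
    unfolding Cop_eq by (rule pis_harmonic_part[OF harmonic_part_mul_ux[OF G nz(1,2)]])
  have Cop_Aop: "Cop m (Aop m G) = C_harm m (p - 1) (q - 1) (dd_ux m G)"
    unfolding Cop_eq Aop_harmonic[OF G(1)] by (rule pis_harmonic_part[OF harmonic_part_mul_ux[OF dG nz(3,4)]])
  have Su: "Su m G = Su_harm m q G"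
    unfolding Su_eq by (rule pis_harmonic_part[OF harmonic_part_u_dx[OF G(1,3) nz(2)]])
  have Sx: "Sx m G = Sx_harm m p G"
    unfolding Sx_eq by (rule pis_harmonic_part[OF harmonic_part_x_du[OF G(1,2) nz(1)]])
  have Sx_Su: "Sx m (Su m G) = Sx_harm m (p - 1) (Su_harm m q G)"
    unfolding Su Sx_eq
    by (intro pis_harmonic_part harmonic_part_x_du harmonic_poly_Su_harm homog_x_Su_harm G nz)
  have Su_Sx: "Su m (Sx m G) = Su_harm m (q - 1) (Sx_harm m p G)"
    unfolding Sx Su_eq
    by (intro pis_harmonic_part harmonic_part_u_dx harmonic_poly_Sx_harm homog_u_Sx_harm G nz)
  have A_C: "Aop m (C_harm m p q G) = dd_ux m (C_harm m p q G)"
    by (intro Aop_harmonic harmonic_poly_C_harm G nz)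
  have "homog_x m p (C_harm m (p - 1) (q - 1) (dd_ux m G))" "homog_u m q (C_harm m (p - 1) (q - 1) (dd_ux m G))"
    using homog_x_C_harm[OF dG(2)] homog_u_C_harm[OF dG(3)] by simp_all
  moreover have "homog_x m p (Sx_harm m (p - 1) (Su_harm m q G))" "homog_u m q (Sx_harm m (p - 1) (Su_harm m q G))"
    using homog_x_Sx_harm[OF homog_x_Su_harm[OF G(2)]] homog_u_Sx_harm[OF homog_u_Su_harm[OF G(3)]] by simp_all
  moreover have "homog_x m p (Su_harm m (q - 1) (Sx_harm m p G))" "homog_u m q (Su_harm m (q - 1) (Sx_harm m p G))"
    using homog_x_Su_harm[OF homog_x_Sx_harm[OF G(2)]] homog_u_Su_harm[OF homog_u_Sx_harm[OF G(3)]] by simp_all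
  ultimately show ?thesis
    using G(2,3) by (simp add: Cop Cop_Aop Sx_Su Su_Sx A_C diagop_bihomog dd_ux_C_harm[OF G nz])
qed

theorem lemma3p5:
  fixes m :: nat and P :: cpoly
  assumes "m > 4" and "is_poly m P" and "harm m P"
  shows "Aop m (Cop m P) =
    (\<lambda>\<alpha> \<beta>. diagop m (\<lambda>hx hu. (hx + hx * hu + hu) / ((hx + 1) * (hu + 1))) (Cop m (Aop m P)) \<alpha> \<beta>
          - diagop m (\<lambda>hx hu. hx + hu) P \<alpha> \<beta>
          + diagop m (\<lambda>hx hu. 1 / (hx + 1)) (Sx m (Su m P)) \<alpha> \<beta>
          + diagop m (\<lambda>hx hu. 1 / (hu + 1)) (Su m (Sx m P)) \<alpha> \<beta>)"
proof -
  have "harmonic_poly m P"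
    using assms(2,3) by (simp add: harmonic_poly_iff)
  then have "Aop m (Cop m P) =
    diagop m (\<lambda>hx hu. (hx + hx * hu + hu) / ((hx + 1) * (hu + 1))) (Cop m (Aop m P))
    - diagop m (\<lambda>hx hu. hx + hu) P
    + diagop m (\<lambda>hx hu. 1 / (hx + 1)) (Sx m (Su m P))
    + diagop m (\<lambda>hx hu. 1 / (hu + 1)) (Su m (Sx m P))"
  proof (induction P rule: harmonic_poly_bihom_induct)
    case (add F G)
    \<comment> \<open>without \<open>plus_fun_apply\<close>, matching modulo \<open>\<eta>\<close> would expand \<open>F + G\<close> pointwise first\<close>
    with assms(1) show ?case
      by (simp add: ops_harmonic_add harmonic_poly_ops linear_op_add[OF linear_op_diagop] algebra_simps
          del: plus_fun_apply minus_apply)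
  next
    case (bihom p q G)
    with assms(1) show ?case
      by (intro Aop_Cop_bihomog) auto
  qed
  then show ?thesis
    by (simp add: fun_eq_iff)
qed

end
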